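(* Assume (H1). (i) For every $c>0$ there exists $\gamma>0$ such that, for $n$ large enough, $$\mathbb{P}_n\big(\exists(k,j)\in I_K,\ u\in\mathbf{T}\setminus\{\emptyset\}:\ |A_{u,k,j}-\mu_k|u||\ge\gamma\sqrt{|u|\log n}\big)\le n^{-c}.$$ (ii) For every $c>0$ there exists $\gamma>0$ such that, for $n$ large enough, $$\mathbb{P}_n\big(\exists(k,j)\in I_K,\ u\in\mathbf{T},\ l\in(0,|u|]:\ |A_{u,l,k,j}-\mu_kl|\ge\gamma\sqrt{l\log n}\big)\le n^{-c}.$$
   Context: Planar trees: finite subsets $T$ of the set of finite words over $\{1,2,\dots\}$ containing the empty word $\emptyset$, with $ui\in T\Rightarrow u\in T$ and $uj\in T$ for $1\le j\le i$. $c_u(T)$ = number of children, $|u|$ = word length (depth), $d$ = graph distance; $v$ is an ancestor of $u$ if $v$ is a prefix of $u$. (H1): $\mu=(\mu_k)_{k\ge0}$ probability on $\mathbb{N}$ with $\mu_0+\mu_1\ne1$, $\sum_kk\mu_k=1$, $\sum_{k\le K}\mu_k=1$ for some integer $K>0$. $\mathbf{T}$ is a Galton–Watson tree with offspring law $\mu$ and $\mathbb{P}_n=\mathbb{P}(\cdot\mid|\mathbf{T}|=n+1)$, for $n$ with positive conditioning probability. $I_K=\{(k,j):1\le j\le k\le K\}$. $A_{u,k,j}$ is the number of strict ancestors $v$ of $u$ with $c_v=k$ such that $u$ is a descendant of (or equal to) $vj$. For $l\in\{0,\dots,|u|\}$, $A_{u,l,k,j}$ is the number of such strict ancestors $v$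 (with $c_v=k$, $u$ descending from $vj$) that additionally satisfy $d(u,v)\le l$. *)

theory Defs
  imports Complex_Main
begin

definition planar_tree :: "nat list set \<Rightarrow> bool" where
  "planar_tree T \<longleftrightarrow> finite T \<and> [] \<in> T \<and> (\<forall>u\<in>T. \<forall>i\<in>set u. 1 \<le> i) \<and>
     (\<forall>u i. u @ [i] \<in> T \<longrightarrow> u \<in> T \<and> (\<forall>j. 1 \<le> j \<and> j \<le> i \<longrightarrow> u @ [j] \<in> T))"

definition nchildren :: "nat list set \<Rightarrow> nat list \<Rightarrow> nat" where
  "nchildren T u = card {i. u @ [i] \<in> T}"

text \<open>Galton--Watson probability of a given planar tree: P(T = t) = prod over u in t of mu(c_u(t)).\<close>
definition gw_weight :: "(nat \<Rightarrow> real) \<Rightarrow> nat list set \<Rightarrow> real" where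
  "gw_weight \<mu> T = (\<Prod>u\<in>T. \<mu> (nchildren T u))"

definition trees_of_size :: "nat \<Rightarrow> nat list set set" where
  "trees_of_size m = {T. planar_tree T \<and> card T = m}"

text \<open>P(|T| = n+1), the conditioning probability.\<close>
definition gw_size_prob :: "(nat \<Rightarrow> real) \<Rightarrow> nat \<Rightarrow> real" where
  "gw_size_prob \<mu> n = (\<Sum>T\<in>trees_of_size (Suc n). gw_weight \<mu> T)"

text \<open>P_n(E) = P(T \<in> E | |T| = n+1).\<close>
definition cond_prob :: "(nat \<Rightarrow> real) \<Rightarrow> nat \<Rightarrow> (nat list set \<Rightarrow> bool) \<Rightarrow> real" where
  "cond_prob \<mu> n E =
     (\<Sum>T\<in>{T\<in>trees_of_size (Suc n). E T}. gw_weight \<mu> T) / gw_size_prob \<mu> n"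

definition A_count :: "nat list set \<Rightarrow> nat list \<Rightarrow> nat \<Rightarrow> nat \<Rightarrow> nat" where
  "A_count T u k j = card {v. v \<in> T \<and> nchildren T v = k \<and> (\<exists>w. u = v @ j # w)}"

text \<open>A_{u,l,k,j}: same, with additionally d(u,v) \<le> l; for an ancestor v of u,
  the graph distance is d(u,v) = |u| - |v|.\<close>
definition A_count_l :: "nat list set \<Rightarrow> nat list \<Rightarrow> nat \<Rightarrow> nat \<Rightarrow> nat \<Rightarrow> nat" where
  "A_count_l T u l k j = card {v. v \<in> T \<and> nchildren T v = k \<and> (\<exists>w. u = v @ j # w)
                                 \<and> length u - length v \<le> l}"

definition H1 :: "(nat \<Rightarrow> real) \<Rightarrow> nat \<Rightarrow> bool" where
  "H1 \<mu> K \<longleftrightarrow> 0 < K \<and> (\<forall>k. 0 \<le> \<mu> k) \<and> (\<forall>k>K. \<mu> k = 0) \<and> (\<Sum>k\<le>K. \<mu> k) = 1 \<and>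
     \<mu> 0 + \<mu> 1 \<noteq> 1 \<and> (\<Sum>k\<le>K. real k * \<mu> k) = 1"

end

theory Submission
  imports Defs
begin

text \<open>Conditioning on \<open>|T| = n + 1\<close> costs only a polynomial factor: a degree count close to its
  mean \<open>(n + 1) \<mu>\<close> has multinomial probability of order at least \<open>n powr -(K + 1)\<close>, and the cycle
  lemma (Kemperman's formula) turns this into \<open>P(|T| = n + 1) \<ge> E n powr -(K + 2)\<close>. Without
  conditioning, the many-to-one formula bounds the expected number of vertices \<open>u\<close> at height \<open>h\<close> whose
  ancestral marks \<open>(c\<^sub>v, j)\<close> are atypical by the probability that \<open>h\<close> i.i.d.\ marks, each equal to
  \<open>(k, j)\<close> with probability \<open>\<mu> k\<close>, are atypical; Chernoff's bound makes this at most
  \<open>2 n powr -(\<gamma>\<^sup>2 / 4)\<close>. A union bound over \<open>k, j, |u|, l \<le> n\<close> and a large \<open>\<gamma>\<close> give (ii);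
  (i) is the case \<open>l = |u|\<close>.\<close>


lemma prod_list_map_conv_prod_nth: "prod_list (map f xs) = (\<Prod>i<length xs. f (xs ! i))"
  by (induction xs) (simp_all del: prod.lessThan_Suc add: prod.lessThan_Suc_shift)

lemma planar_tree_take:
  assumes "planar_tree T" "u \<in> T" shows "take t u \<in> T"
  using assms(2)
proof (induction u arbitrary: t rule: rev_induct)
  case Nil then show ?case by simp
next
  case (snoc x xs)
  have "xs \<in> T" using assms(1) snoc.prems unfolding planar_tree_def by blast
  then show ?case using snoc by (cases "t \<le> length xs") simp_all
qed

lemma planar_tree_children:
  assumes "planar_tree T" shows "{i. u @ [i] \<in> T} = {1..nchildren T u}"
proof -
  let ?A = "{i. u @ [i] \<in> T}"
  have "inj_on (\<lambda>i. u @ [i]) ?A" "(\<lambda>i. u @ [i]) ` ?A \<subseteq> T" by (auto simp: inj_on_def)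
  then have "finite ?A" using assms unfolding planar_tree_def by (meson finite_imageD finite_subset)
  show ?thesis
  proof (cases "?A = {}")
    case True then show ?thesis by (simp add: nchildren_def)
  next
    case False
    define m where "m = Max ?A"
    have mA: "m \<in> ?A" using \<open>finite ?A\<close> False m_def Max_in by blast
    have "?A \<subseteq> {1..m}"
    proof
      fix i assume i: "i \<in> ?A"
      then have "1 \<le> i" using assms unfolding planar_tree_def by fastforce
      moreover have "i \<le> m" using Max_ge[OF \<open>finite ?A\<close> i] m_def by simp
      ultimately show "i \<in> {1..m}" by simp
    qed
    moreover have "\<forall>j. 1 \<le> j \<and> j \<le> m \<longrightarrow> u @ [j] \<in> T"
      using mA assms unfolding planar_tree_def by blast
    ultimately have "?A = {1..m}" by auto
    then show ?thesis by (simp add: nchildren_def)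
  qed
qed

lemma planar_tree_child_iff:
  assumes "planar_tree T" shows "u @ [i] \<in> T \<longleftrightarrow> 1 \<le> i \<and> i \<le> nchildren T u"
  using planar_tree_children[OF assms, of u] by (metis atLeastAtMost_iff mem_Collect_eq)

lemma nth_le_nchildren:
  assumes "planar_tree T" "u \<in> T" "t < length u" shows "u ! t \<le> nchildren T (take t u)"
proof -
  have "take t u @ [u ! t] \<in> T"
    using planar_tree_take[OF assms(1,2), of "Suc t"] assms(3) by (simp add: take_Suc_conv_app_nth)
  then show ?thesis using planar_tree_child_iff[OF assms(1)] by blast
qed

lemma length_lt_card:
  assumes "planar_tree T" "u \<in> T" shows "length u < card T"
proof -
  have "(\<lambda>t. take t u) ` {..length u} \<subseteq> T" using planar_tree_take[OF assms] by auto
  then have "card ((\<lambda>t. take t u) ` {..length u}) \<le> card T"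
    using assms(1) by (intro card_mono) (auto simp: planar_tree_def)
  moreover have "inj_on (\<lambda>t. take t u) {..length u}"
    by (rule inj_onI) (metis atMost_iff length_take min.absorb2)
  ultimately show ?thesis using card_image by fastforce
qed

lemma nchildren_le_card:
  assumes "planar_tree T" shows "nchildren T u \<le> card T"
proof -
  have "inj_on (\<lambda>i. u @ [i]) {i. u @ [i] \<in> T}" by (auto simp: inj_on_def)
  moreover have "(\<lambda>i. u @ [i]) ` {i. u @ [i] \<in> T} \<subseteq> T" by auto
  ultimately have "card {i. u @ [i] \<in> T} \<le> card T"
    using assms by (metis card_image card_mono planar_tree_def)
  then show ?thesis by (simp add: nchildren_def)
qed

lemma sum_nchildren:
  assumes "planar_tree T" shows "(\<Sum>u\<in>T. nchildren T u) = card T - 1"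
proof -
  have fin: "finite T" using assms by (simp add: planar_tree_def)
  let ?E = "Sigma T (\<lambda>u. {i. u @ [i] \<in> T})"
  have fin2: "\<forall>u\<in>T. finite {i. u @ [i] \<in> T}" using planar_tree_children[OF assms] by simp
  have "(\<Sum>u\<in>T. nchildren T u) = card ?E"
    using card_SigmaI[OF fin fin2] by (simp add: nchildren_def)
  also have "\<dots> = card ((\<lambda>(u, i). u @ [i]) ` ?E)"
    by (rule card_image[symmetric]) (auto simp: inj_on_def)
  also have "(\<lambda>(u, i). u @ [i]) ` ?E = T - {[]}"
  proof
    show "T - {[]} \<subseteq> (\<lambda>(u, i). u @ [i]) ` ?E"
    proof
      fix v assume v: "v \<in> T - {[]}"
      then have "v = butlast v @ [last v]" by simp
      moreover from this have "butlast v \<in> T" using v assms unfolding planar_tree_def by (metis DiffD1)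
      ultimately show "v \<in> (\<lambda>(u, i). u @ [i]) ` ?E"
        using v by (auto intro!: image_eqI[of _ _ "(butlast v, last v)"])
    qed
  qed auto
  also have "card (T - {[]}) = card T - 1" using fin assms by (simp add: planar_tree_def)
  finally show ?thesis .
qed

lemma finite_trees_of_size: "finite (trees_of_size N)"
proof -
  have "trees_of_size N \<subseteq> Pow {u. set u \<subseteq> {..N} \<and> length u \<le> N}"
  proof
    fix T assume "T \<in> trees_of_size N"
    then have pl: "planar_tree T" and c: "card T = N" by (auto simp: trees_of_size_def)
    have "set u \<subseteq> {..N} \<and> length u \<le> N" if u: "u \<in> T" for u
    proof
      show "set u \<subseteq> {..N}"
      proof
        fix x assume "x \<in> set u"
        then obtain t where "t < length u" "x = u ! t" by (metis in_set_conv_nth)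
        then show "x \<in> {..N}" using nth_le_nchildren[OF pl u] nchildren_le_card[OF pl, of "take t u"] c by fastforce
      qed
      show "length u \<le> N" using length_lt_card[OF pl u] c by simp
    qed
    then show "T \<in> Pow {u. set u \<subseteq> {..N} \<and> length u \<le> N}" by auto
  qed
  moreover have "finite {u. set u \<subseteq> {..N} \<and> length u \<le> N}"
    by (rule finite_lists_length_le) simp
  ultimately show ?thesis by (meson finite_Pow_iff finite_subset)
qed

lemma gw_weight_nonneg: "\<forall>k. 0 \<le> \<mu> k \<Longrightarrow> 0 \<le> gw_weight \<mu> T"
  by (simp add: gw_weight_def prod_nonneg)

lemma gw_weight_nonzero_nchildren:
  assumes "gw_weight \<mu> T \<noteq> 0" "planar_tree T" "u \<in> T" shows "\<mu> (nchildren T u) \<noteq> 0"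
  using assms unfolding gw_weight_def planar_tree_def by (metis prod_zero)


subsection \<open>Decomposition at the root\<close>

definition subtree :: "nat list set \<Rightarrow> nat \<Rightarrow> nat list set" where
  "subtree T i = {w. i # w \<in> T}"

text \<open>Child \<open>i + 1\<close> of the root carries \<open>ts ! i\<close>: letters start at 1.\<close>
definition graft :: "nat list set list \<Rightarrow> nat list set" where
  "graft ts = insert [] (\<Union>i<length ts. (\<lambda>w. Suc i # w) ` (ts ! i))"

lemma mem_graft_Cons: "Suc i # w \<in> graft ts \<longleftrightarrow> i < length ts \<and> w \<in> ts ! i"
  by (auto simp: graft_def)

lemma mem_graft: "u \<in> graft ts \<longleftrightarrow> u = [] \<or> (\<exists>i w. u = Suc i # w \<and> i < length ts \<and> w \<in> ts ! i)"
  by (auto simp: graft_def)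

lemma planar_tree_subtree:
  assumes "planar_tree T" "[i] \<in> T" shows "planar_tree (subtree T i)"
proof -
  have "(\<lambda>w. i # w) ` subtree T i \<subseteq> T" by (auto simp: subtree_def)
  then have "finite (subtree T i)" using assms(1) unfolding planar_tree_def
    by (meson finite_imageD finite_subset inj_onI list.inject)
  moreover have "u \<in> subtree T i \<and> (\<forall>l. 1 \<le> l \<and> l \<le> j \<longrightarrow> u @ [l] \<in> subtree T i)"
    if "u @ [j] \<in> subtree T i" for u j
  proof -
    have "(i # u) @ [j] \<in> T" using that by (simp add: subtree_def)
    then show ?thesis using assms(1) unfolding planar_tree_def subtree_def by (metis append_Cons mem_Collect_eq)
  qed
  moreover have "[] \<in> subtree T i" using assms by (simp add: subtree_def)
  moreover have "\<forall>u\<in>subtree T i. \<forall>j\<in>set u. 1 \<le> j"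
    using assms(1) unfolding planar_tree_def subtree_def by auto
  ultimately show ?thesis unfolding planar_tree_def by blast
qed

lemma graft_subtrees:
  assumes "planar_tree T"
  shows "graft (map (\<lambda>i. subtree T (Suc i)) [0..<nchildren T []]) = T"
proof
  show "T \<subseteq> graft (map (\<lambda>i. subtree T (Suc i)) [0..<nchildren T []])"
  proof
    fix w assume w: "w \<in> T"
    show "w \<in> graft (map (\<lambda>i. subtree T (Suc i)) [0..<nchildren T []])"
    proof (cases w)
      case (Cons a w')
      have "[] @ [a] \<in> T" using planar_tree_take[OF assms w, of 1] Cons by simp
      then have "1 \<le> a \<and> a \<le> nchildren T []" using planar_tree_child_iff[OF assms] by blast
      then show ?thesis using Cons w
        by (auto simp: graft_def subtree_def intro!: bexI[of _ "a - 1"] image_eqI[of _ _ w'])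
    qed (simp add: graft_def)
  qed
  show "graft (map (\<lambda>i. subtree T (Suc i)) [0..<nchildren T []]) \<subseteq> T"
    using assms unfolding planar_tree_def by (auto simp: graft_def subtree_def)
qed

lemma planar_tree_decomp:
  assumes "planar_tree T"
  defines "ts \<equiv> map (\<lambda>i. subtree T (Suc i)) [0..<nchildren T []]"
  shows "graft ts = T" "\<forall>t\<in>set ts. planar_tree t" "length ts = nchildren T []"
proof -
  show "graft ts = T" using graft_subtrees[OF assms(1)] ts_def by simp
  show "length ts = nchildren T []" by (simp add: ts_def)
  show "\<forall>t\<in>set ts. planar_tree t"
  proof
    fix t assume "t \<in> set ts"
    then obtain i where i: "i < nchildren T []" "t = subtree T (Suc i)" by (auto simp: ts_def)
    have "[] @ [Suc i] \<in> T" using planar_tree_child_iff[OF assms(1), of "[]" "Suc i"] i by simp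
    then show "planar_tree t" using planar_tree_subtree[OF assms(1)] i by simp
  qed
qed

lemma planar_tree_graft:
  assumes "\<forall>t\<in>set ts. planar_tree t" shows "planar_tree (graft ts)"
proof -
  have fin: "finite (graft ts)" unfolding graft_def
    using assms by (auto simp: planar_tree_def)
  have letters: "\<forall>u\<in>graft ts. \<forall>j\<in>set u. 1 \<le> j"
  proof
    fix u assume "u \<in> graft ts"
    then show "\<forall>j\<in>set u. 1 \<le> j" unfolding mem_graft
      using assms nth_mem unfolding planar_tree_def by fastforce
  qed
  have cl: "\<forall>u i. u @ [i] \<in> graft ts \<longrightarrow> u \<in> graft ts \<and> (\<forall>j. 1 \<le> j \<and> j \<le> i \<longrightarrow> u @ [j] \<in> graft ts)"
  proof (intro allI impI)
    fix u i assume ui: "u @ [i] \<in> graft ts"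
    show "u \<in> graft ts \<and> (\<forall>j. 1 \<le> j \<and> j \<le> i \<longrightarrow> u @ [j] \<in> graft ts)"
    proof (cases u)
      case Nil
      then obtain i' where i': "i = Suc i'" "i' < length ts" "[] \<in> ts ! i'"
        using ui by (auto simp: mem_graft)
      have "\<forall>j. 1 \<le> j \<and> j \<le> i \<longrightarrow> [j] \<in> graft ts"
      proof (intro allI impI)
        fix j assume j: "1 \<le> j \<and> j \<le> i"
        then obtain j' where j': "j = Suc j'" by (cases j) auto
        have "j' < length ts" using j j' i' by simp
        then have "planar_tree (ts ! j')" using assms nth_mem by blast
        then have "[] \<in> ts ! j'" by (simp add: planar_tree_def)
        then show "[j] \<in> graft ts" using j' \<open>j' < length ts\<close> by (simp add: mem_graft_Cons)
      qed
      then show ?thesis using Nil by (simp add: graft_def)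
    next
      case (Cons a u')
      then obtain a' where a': "a = Suc a'" "a' < length ts" "u' @ [i] \<in> ts ! a'"
        using ui by (auto simp: mem_graft)
      have "planar_tree (ts ! a')" using assms nth_mem a' by blast
      then have "u' \<in> ts ! a' \<and> (\<forall>j. 1 \<le> j \<and> j \<le> i \<longrightarrow> u' @ [j] \<in> ts ! a')"
        using a' unfolding planar_tree_def by blast
      then show ?thesis using Cons a' by (simp add: mem_graft_Cons)
    qed
  qed
  show ?thesis unfolding planar_tree_def using fin letters cl by (simp add: graft_def)
qed

lemma subtree_graft: "i < length ts \<Longrightarrow> subtree (graft ts) (Suc i) = ts ! i"
  by (auto simp: subtree_def mem_graft_Cons)

lemma nchildren_graft_root:
  assumes "\<forall>t\<in>set ts. [] \<in> t" shows "nchildren (graft ts) [] = length ts"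
proof -
  have "{i. [] @ [i] \<in> graft ts} = Suc ` {..<length ts}"
    using assms nth_mem by (fastforce simp: mem_graft)
  then show ?thesis by (simp add: nchildren_def card_image)
qed

lemma nchildren_graft_Cons:
  "i < length ts \<Longrightarrow> nchildren (graft ts) (Suc i # w) = nchildren (ts ! i) w"
  by (simp add: nchildren_def mem_graft_Cons)

lemma graft_inj:
  assumes "\<forall>t\<in>set ts. [] \<in> t" "\<forall>t\<in>set ts'. [] \<in> t" "graft ts = graft ts'"
  shows "ts = ts'"
proof (rule nth_equalityI)
  show "length ts = length ts'"
    using nchildren_graft_root[OF assms(1)] nchildren_graft_root[OF assms(2)] assms(3) by simp
  then show "ts ! i = ts' ! i" if "i < length ts" for i
    using that subtree_graft[of i ts] subtree_graft[of i ts'] assms(3) by simp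
qed

lemma card_graft:
  assumes "\<forall>t\<in>set ts. finite t" shows "card (graft ts) = Suc (sum_list (map card ts))"
proof -
  have "card (\<Union>i<length ts. (\<lambda>w. Suc i # w) ` (ts ! i)) = (\<Sum>i<length ts. card ((\<lambda>w. Suc i # w) ` (ts ! i)))"
    using assms by (intro card_UN_disjoint) auto
  also have "\<dots> = sum_list (map card ts)"
    by (simp add: card_image sum_list_sum_nth atLeast0LessThan)
  finally have "card (\<Union>i<length ts. (\<lambda>w. Suc i # w) ` (ts ! i)) = sum_list (map card ts)" .
  moreover have "finite (\<Union>i<length ts. (\<lambda>w. Suc i # w) ` (ts ! i))" using assms by simp
  moreover have "[] \<notin> (\<Union>i<length ts. (\<lambda>w. Suc i # w) ` (ts ! i))" by auto
  ultimately show ?thesis by (simp add: graft_def)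
qed

lemma gw_weight_graft:
  assumes "\<forall>t\<in>set ts. planar_tree t"
  shows "gw_weight \<mu> (graft ts) = \<mu> (length ts) * prod_list (map (gw_weight \<mu>) ts)"
proof -
  have fin: "\<forall>t\<in>set ts. finite t" and roots: "\<forall>t\<in>set ts. [] \<in> t"
    using assms by (auto simp: planar_tree_def)
  have "(\<Prod>u\<in>(\<Union>i<length ts. (\<lambda>w. Suc i # w) ` (ts ! i)). \<mu> (nchildren (graft ts) u))
      = (\<Prod>i<length ts. \<Prod>u\<in>(\<lambda>w. Suc i # w) ` (ts ! i). \<mu> (nchildren (graft ts) u))"
    using fin by (intro prod.UNION_disjoint) auto
  also have "\<dots> = (\<Prod>i<length ts. gw_weight \<mu> (ts ! i))"
    by (intro prod.cong refl) (simp add: prod.reindex gw_weight_def nchildren_graft_Cons)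
  also have "\<dots> = prod_list (map (gw_weight \<mu>) ts)"
    by (simp add: prod_list_map_conv_prod_nth)
  finally have "(\<Prod>u\<in>(\<Union>i<length ts. (\<lambda>w. Suc i # w) ` (ts ! i)). \<mu> (nchildren (graft ts) u))
      = prod_list (map (gw_weight \<mu>) ts)" .
  moreover have "finite (\<Union>i<length ts. (\<lambda>w. Suc i # w) ` (ts ! i))" using fin by simp
  moreover have "[] \<notin> (\<Union>i<length ts. (\<lambda>w. Suc i # w) ` (ts ! i))" by auto
  ultimately show ?thesis using nchildren_graft_root[OF roots]
    by (simp add: gw_weight_def graft_def)
qed


definition tuples :: "'a set \<Rightarrow> nat \<Rightarrow> 'a list set" where
  "tuples A k = {xs. set xs \<subseteq> A \<and> length xs = k}"

lemma tuples_0 [simp]: "tuples A 0 = {[]}"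
  by (auto simp: tuples_def)

lemma tuples_Suc: "tuples A (Suc k) = (\<lambda>(x, xs). x # xs) ` (A \<times> tuples A k)"
proof
  show "tuples A (Suc k) \<subseteq> (\<lambda>(x, xs). x # xs) ` (A \<times> tuples A k)"
  proof
    fix ys assume "ys \<in> tuples A (Suc k)"
    then obtain x xs where "ys = x # xs" "x \<in> A" "xs \<in> tuples A k"
      by (cases ys) (auto simp: tuples_def)
    then show "ys \<in> (\<lambda>(x, xs). x # xs) ` (A \<times> tuples A k)" by force
  qed
qed (auto simp: tuples_def)

lemma finite_tuples: "finite A \<Longrightarrow> finite (tuples A k)"
  unfolding tuples_def using finite_lists_length_eq by blast

lemma sum_tuples_Suc:
  assumes "finite A"
  shows "(\<Sum>ys\<in>tuples A (Suc k). F ys) = (\<Sum>x\<in>A. \<Sum>xs\<in>tuples A k. F (x # xs))"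
proof -
  have "(\<Sum>ys\<in>tuples A (Suc k). F ys) = (\<Sum>p\<in>A \<times> tuples A k. F ((\<lambda>(x, xs). x # xs) p))"
    unfolding tuples_Suc by (subst sum.reindex) (auto simp: inj_on_def)
  also have "\<dots> = (\<Sum>x\<in>A. \<Sum>xs\<in>tuples A k. F (x # xs))"
    by (simp add: sum.cartesian_product split_def)
  finally show ?thesis .
qed

lemma sum_tuples_prod_list:
  fixes f :: "'a \<Rightarrow> real"
  assumes "finite A"
  shows "(\<Sum>xs\<in>tuples A k. prod_list (map f xs)) = (\<Sum>x\<in>A. f x) ^ k"
  by (induction k)
    (simp_all add: sum_tuples_Suc[OF assms] sum_distrib_left[symmetric] sum_distrib_right[symmetric])

lemma sum_tuples_prod_list_nth:
  fixes f g :: "'a \<Rightarrow> real"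
  assumes "finite A" "i < k"
  shows "(\<Sum>xs\<in>tuples A k. prod_list (map f xs) * g (xs ! i)) = (\<Sum>x\<in>A. f x) ^ (k - 1) * (\<Sum>x\<in>A. f x * g x)"
  using assms(2)
proof (induction k arbitrary: i)
  case 0 then show ?case by simp
next
  case (Suc k)
  show ?case
  proof (cases i)
    case 0
    have "(\<Sum>xs\<in>tuples A (Suc k). prod_list (map f xs) * g (xs ! i))
        = (\<Sum>x\<in>A. \<Sum>xs\<in>tuples A k. (f x * g x) * prod_list (map f xs))"
      using 0 by (simp add: sum_tuples_Suc[OF assms(1)] algebra_simps)
    also have "\<dots> = (\<Sum>x\<in>A. f x * g x) * (\<Sum>x\<in>A. f x) ^ k"
      by (simp add: sum_distrib_left[symmetric] sum_distrib_right[symmetric] sum_tuples_prod_list[OF assms(1)])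
    finally show ?thesis by simp
  next
    case (Suc i')
    then have i': "i' < k" using Suc.prems by simp
    have "(\<Sum>xs\<in>tuples A (Suc k). prod_list (map f xs) * g (xs ! i))
        = (\<Sum>x\<in>A. f x * (\<Sum>xs\<in>tuples A k. prod_list (map f xs) * g (xs ! i')))"
      using Suc by (simp add: sum_tuples_Suc[OF assms(1)] sum_distrib_left algebra_simps)
    also have "\<dots> = (\<Sum>x\<in>A. f x) * ((\<Sum>x\<in>A. f x) ^ (k - 1) * (\<Sum>x\<in>A. f x * g x))"
      using Suc.IH[OF i'] by (simp add: sum_distrib_right)
    also have "\<dots> = (\<Sum>x\<in>A. f x) ^ (Suc k - 1) * (\<Sum>x\<in>A. f x * g x)"
      using i' by (cases k) auto
    finally show ?thesis .
  qed
qed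

definition bounded_trees :: "nat \<Rightarrow> nat \<Rightarrow> nat list set set" where
  "bounded_trees K H = {T. planar_tree T \<and> (\<forall>u\<in>T. length u \<le> H \<and> set u \<subseteq> {..K})}"

lemma finite_bounded_trees: "finite (bounded_trees K H)"
proof -
  have "bounded_trees K H \<subseteq> Pow {u. set u \<subseteq> {..K} \<and> length u \<le> H}"
    by (auto simp: bounded_trees_def)
  moreover have "finite {u. set u \<subseteq> {..K} \<and> length u \<le> H}"
    by (rule finite_lists_length_le) simp
  ultimately show ?thesis by (meson finite_Pow_iff finite_subset)
qed

lemma bounded_trees_0: "bounded_trees K 0 = {{[]}}"
  by (auto simp: bounded_trees_def planar_tree_def)

lemma bounded_trees_mono: "H \<le> H' \<Longrightarrow> bounded_trees K H \<subseteq> bounded_trees K H'"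
  by (auto simp: bounded_trees_def)

lemma bounded_trees_Suc: "bounded_trees K (Suc H) = graft ` (\<Union>k\<le>K. tuples (bounded_trees K H) k)"
proof
  show "bounded_trees K (Suc H) \<subseteq> graft ` (\<Union>k\<le>K. tuples (bounded_trees K H) k)"
  proof
    fix T assume T: "T \<in> bounded_trees K (Suc H)"
    then have pl: "planar_tree T" by (simp add: bounded_trees_def)
    define ts where "ts = map (\<lambda>i. subtree T (Suc i)) [0..<nchildren T []]"
    note d = planar_tree_decomp[OF pl, folded ts_def]
    have k: "nchildren T [] \<le> K"
    proof (cases "nchildren T [] = 0")
      case False
      then have "[] @ [nchildren T []] \<in> T" using planar_tree_child_iff[OF pl, of "[]" "nchildren T []"] by simp
      then show ?thesis using T by (auto simp: bounded_trees_def)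
    qed simp
    have "set ts \<subseteq> bounded_trees K H"
    proof
      fix t assume t: "t \<in> set ts"
      then obtain i where i: "t = subtree T (Suc i)" by (auto simp: ts_def)
      show "t \<in> bounded_trees K H" using d(2) t T unfolding bounded_trees_def i subtree_def by fastforce
    qed
    then have "ts \<in> tuples (bounded_trees K H) (nchildren T [])" using d(3) by (simp add: tuples_def)
    then show "T \<in> graft ` (\<Union>k\<le>K. tuples (bounded_trees K H) k)" using d(1)[symmetric] k by blast
  qed
  show "graft ` (\<Union>k\<le>K. tuples (bounded_trees K H) k) \<subseteq> bounded_trees K (Suc H)"
  proof
    fix T assume "T \<in> graft ` (\<Union>k\<le>K. tuples (bounded_trees K H) k)"
    then obtain k ts where k: "k \<le> K" "ts \<in> tuples (bounded_trees K H) k" "T = graft ts" by blast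
    have pl: "\<forall>t\<in>set ts. planar_tree t" using k(2) by (auto simp: tuples_def bounded_trees_def)
    have "\<forall>u\<in>T. length u \<le> Suc H \<and> set u \<subseteq> {..K}"
    proof
      fix u assume "u \<in> T"
      then have "u = [] \<or> (\<exists>i w. u = Suc i # w \<and> i < length ts \<and> w \<in> ts ! i)"
        using k(3) mem_graft by blast
      then show "length u \<le> Suc H \<and> set u \<subseteq> {..K}"
      proof
        assume "\<exists>i w. u = Suc i # w \<and> i < length ts \<and> w \<in> ts ! i"
        then obtain i w where iw: "u = Suc i # w" "i < length ts" "w \<in> ts ! i" by blast
        have "ts ! i \<in> bounded_trees K H" using k(2) iw(2) nth_mem by (auto simp: tuples_def)
        then show ?thesis using iw k(1,2) by (auto simp: bounded_trees_def tuples_def)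
      qed simp
    qed
    then show "T \<in> bounded_trees K (Suc H)" using planar_tree_graft[OF pl] k(3) by (simp add: bounded_trees_def)
  qed
qed

lemma sum_bounded_trees_Suc:
  fixes F :: "nat list set \<Rightarrow> real"
  shows "(\<Sum>T\<in>bounded_trees K (Suc H). F T) = (\<Sum>k\<le>K. \<Sum>ts\<in>tuples (bounded_trees K H) k. F (graft ts))"
proof -
  have "inj_on graft (\<Union>k\<le>K. tuples (bounded_trees K H) k)"
    by (rule inj_onI, rule graft_inj) (auto simp: tuples_def bounded_trees_def planar_tree_def)
  then have "(\<Sum>T\<in>bounded_trees K (Suc H). F T) = (\<Sum>ts\<in>(\<Union>k\<le>K. tuples (bounded_trees K H) k). F (graft ts))"
    unfolding bounded_trees_Suc by (simp add: sum.reindex)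
  also have "\<dots> = (\<Sum>k\<le>K. \<Sum>ts\<in>tuples (bounded_trees K H) k. F (graft ts))"
    by (rule sum.UNION_disjoint) (simp_all add: finite_tuples finite_bounded_trees, auto simp: tuples_def)
  finally show ?thesis .
qed

lemma gw_weight_graft_tuple:
  "ts \<in> tuples (bounded_trees K H) k \<Longrightarrow> gw_weight \<mu> (graft ts) = \<mu> k * prod_list (map (gw_weight \<mu>) ts)"
  using gw_weight_graft[of ts \<mu>] by (auto simp: tuples_def bounded_trees_def)

lemma gw_mass_bounded_trees_le_1:
  assumes "\<forall>k. 0 \<le> \<mu> k" "(\<Sum>k\<le>K. \<mu> k) \<le> 1"
  shows "(\<Sum>T\<in>bounded_trees K H. gw_weight \<mu> T) \<le> 1"
proof (induction H)
  case 0
  have "\<mu> 0 \<le> (\<Sum>k\<le>K. \<mu> k)" using assms(1) by (intro member_le_sum) auto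
  then show ?case using assms(2) by (simp add: bounded_trees_0 gw_weight_def nchildren_def)
next
  case (Suc H)
  define m where "m = (\<Sum>T\<in>bounded_trees K H. gw_weight \<mu> T)"
  have m: "0 \<le> m" "m \<le> 1"
    using Suc gw_weight_nonneg[OF assms(1)] by (simp_all add: m_def sum_nonneg)
  have "(\<Sum>T\<in>bounded_trees K (Suc H). gw_weight \<mu> T) = (\<Sum>k\<le>K. \<mu> k * m ^ k)"
    by (simp add: sum_bounded_trees_Suc gw_weight_graft_tuple sum_distrib_left[symmetric]
        sum_tuples_prod_list finite_bounded_trees m_def cong: sum.cong)
  also have "\<dots> \<le> (\<Sum>k\<le>K. \<mu> k)"
    by (intro sum_mono) (simp add: assms(1) m mult_left_le power_le_one)
  finally show ?case using assms(2) by simp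
qed

lemma trees_of_size_in_bounded_trees:
  assumes "T \<in> trees_of_size (Suc n)" "gw_weight \<mu> T \<noteq> 0" "\<forall>k>K. \<mu> k = 0"
  shows "T \<in> bounded_trees K n"
proof -
  have pl: "planar_tree T" and c: "card T = Suc n" using assms(1) by (auto simp: trees_of_size_def)
  have "length u \<le> n \<and> set u \<subseteq> {..K}" if u: "u \<in> T" for u
  proof
    show "length u \<le> n" using length_lt_card[OF pl u] c by simp
    show "set u \<subseteq> {..K}"
    proof
      fix x assume "x \<in> set u"
      then obtain t where t: "t < length u" "x = u ! t" by (metis in_set_conv_nth)
      have "nchildren T (take t u) \<le> K"
        using gw_weight_nonzero_nchildren[OF assms(2) pl planar_tree_take[OF pl u]] assms(3) by (meson not_le)
      then show "x \<in> {..K}" using nth_le_nchildren[OF pl u t(1)] t(2) by simp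
    qed
  qed
  then show ?thesis using pl by (simp add: bounded_trees_def)
qed


subsection \<open>The size-biased spine\<close>

text \<open>\<open>spine_exp \<mu> K h B\<close> is the expectation of \<open>B\<close> over sequences of \<open>h\<close> i.i.d.\ marks \<open>(k, j)\<close>
  with \<open>1 \<le> j \<le> k\<close>, each of weight \<open>\<mu> k\<close>: the law of the ancestral line of a uniformly chosen
  individual of generation \<open>h\<close> in the size-biased tree. It is a probability exactly when \<open>\<mu>\<close> is critical.\<close>
fun spine_exp :: "(nat \<Rightarrow> real) \<Rightarrow> nat \<Rightarrow> nat \<Rightarrow> ((nat \<times> nat) list \<Rightarrow> real) \<Rightarrow> real" where
  "spine_exp \<mu> K 0 B = B []"
| "spine_exp \<mu> K (Suc h) B = (\<Sum>k\<le>K. \<mu> k * (\<Sum>i<k. spine_exp \<mu> K h (\<lambda>s. B ((k, Suc i) # s))))"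

lemma spine_exp_nonneg:
  assumes "\<forall>k. 0 \<le> \<mu> k" "\<forall>s. 0 \<le> B s" shows "0 \<le> spine_exp \<mu> K h B"
  using assms(2)
  by (induction h arbitrary: B) (simp_all add: assms(1) sum_nonneg)

lemma spine_exp_mono:
  assumes "\<forall>k. 0 \<le> \<mu> k" "\<forall>s. length s = h \<longrightarrow> B s \<le> C s"
  shows "spine_exp \<mu> K h B \<le> spine_exp \<mu> K h C"
  using assms(2)
proof (induction h arbitrary: B C)
  case (Suc h)
  show ?case
    by (simp, intro sum_mono mult_left_mono, auto simp: assms(1) Suc)
qed simp

lemma spine_exp_cmult: "spine_exp \<mu> K h (\<lambda>s. c * B s) = c * spine_exp \<mu> K h B"
  by (induction h arbitrary: B) (simp_all add: sum_distrib_left algebra_simps)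

lemma spine_exp_add: "spine_exp \<mu> K h (\<lambda>s. B s + C s) = spine_exp \<mu> K h B + spine_exp \<mu> K h C"
  by (induction h arbitrary: B C) (simp_all add: sum.distrib algebra_simps)

lemma spine_exp_const:
  assumes "(\<Sum>k\<le>K. real k * \<mu> k) = 1" shows "spine_exp \<mu> K h (\<lambda>_. c) = c"
proof (induction h)
  case (Suc h)
  have "spine_exp \<mu> K (Suc h) (\<lambda>_. c) = (\<Sum>k\<le>K. real k * \<mu> k) * c"
    using Suc by (simp add: algebra_simps) (simp add: sum_distrib_left)
  then show ?case using assms by simp
qed simp

lemma spine_exp_drop:
  assumes "(\<Sum>k\<le>K. real k * \<mu> k) = 1"
  shows "spine_exp \<mu> K (a + b) (\<lambda>s. f (drop a s)) = spine_exp \<mu> K b f"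
proof (induction a)
  case (Suc a)
  then have "spine_exp \<mu> K (Suc a + b) (\<lambda>s. f (drop (Suc a) s)) = (\<Sum>k\<le>K. real k * \<mu> k) * spine_exp \<mu> K b f"
    by (simp add: sum_distrib_left ac_simps)
  then show ?case using assms by simp
qed simp

lemma spine_exp_prod_list:
  "spine_exp \<mu> K h (\<lambda>s. prod_list (map g s)) = (\<Sum>k\<le>K. \<mu> k * (\<Sum>i<k. g (k, Suc i))) ^ h"
proof (induction h)
  case (Suc h)
  have "spine_exp \<mu> K (Suc h) (\<lambda>s. prod_list (map g s))
      = (\<Sum>k\<le>K. \<mu> k * (\<Sum>i<k. g (k, Suc i) * spine_exp \<mu> K h (\<lambda>s. prod_list (map g s))))"
    by (simp add: spine_exp_cmult)
  also have "\<dots> = (\<Sum>k\<le>K. \<mu> k * (\<Sum>i<k. g (k, Suc i))) * spine_exp \<mu> K h (\<lambda>s. prod_list (map g s))"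
    by (simp add: sum_distrib_left sum_distrib_right ac_simps)
  finally show ?case using Suc by simp
qed simp

definition spine :: "nat list set \<Rightarrow> nat list \<Rightarrow> (nat \<times> nat) list" where
  "spine T u = map (\<lambda>t. (nchildren T (take t u), u ! t)) [0..<length u]"

lemma spine_graft:
  assumes "i < length ts" "\<forall>t\<in>set ts. [] \<in> t"
  shows "spine (graft ts) (Suc i # w) = (length ts, Suc i) # spine (ts ! i) w"
proof -
  have "[0..<length (Suc i # w)] = 0 # map Suc [0..<length w]"
    by (simp add: map_Suc_upt upt_conv_Cons del: upt_Suc)
  then show ?thesis unfolding spine_def
    using assms by (simp add: nchildren_graft_root nchildren_graft_Cons)
qed

lemma sum_level_graft:
  assumes "\<forall>t\<in>set ts. planar_tree t"
  shows "(\<Sum>u\<in>{u \<in> graft ts. length u = Suc h}. B (spine (graft ts) u))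
    = (\<Sum>i<length ts. \<Sum>w\<in>{w \<in> ts ! i. length w = h}. B ((length ts, Suc i) # spine (ts ! i) w))"
proof -
  have roots: "\<forall>t\<in>set ts. [] \<in> t" using assms unfolding planar_tree_def by blast
  have fin: "\<forall>i\<in>{..<length ts}. finite ((\<lambda>w. Suc i # w) ` {w \<in> ts ! i. length w = h})"
    using assms nth_mem unfolding planar_tree_def by fastforce
  have disj: "\<forall>i\<in>{..<length ts}. \<forall>j\<in>{..<length ts}. i \<noteq> j \<longrightarrow>
      (\<lambda>w. Suc i # w) ` {w \<in> ts ! i. length w = h} \<inter> (\<lambda>w. Suc j # w) ` {w \<in> ts ! j. length w = h} = {}"
    by auto
  have "{u \<in> graft ts. length u = Suc h} = (\<Union>i<length ts. (\<lambda>w. Suc i # w) ` {w \<in> ts ! i. length w = h})"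
    by (auto simp: graft_def)
  then have "(\<Sum>u\<in>{u \<in> graft ts. length u = Suc h}. B (spine (graft ts) u))
     = (\<Sum>i<length ts. \<Sum>u\<in>(\<lambda>w. Suc i # w) ` {w \<in> ts ! i. length w = h}. B (spine (graft ts) u))"
    using sum.UNION_disjoint[OF _ fin disj] by simp
  also have "\<dots> = (\<Sum>i<length ts. \<Sum>w\<in>{w \<in> ts ! i. length w = h}. B ((length ts, Suc i) # spine (ts ! i) w))"
  proof (rule sum.cong[OF refl])
    fix i assume "i \<in> {..<length ts}"
    then show "(\<Sum>u\<in>(\<lambda>w. Suc i # w) ` {w \<in> ts ! i. length w = h}. B (spine (graft ts) u))
      = (\<Sum>w\<in>{w \<in> ts ! i. length w = h}. B ((length ts, Suc i) # spine (ts ! i) w))"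
      by (subst sum.reindex) (auto simp: inj_on_def spine_graft[OF _ roots] intro!: sum.cong)
  qed
  finally show ?thesis .
qed

definition level_sum :: "(nat \<Rightarrow> real) \<Rightarrow> nat \<Rightarrow> nat \<Rightarrow> nat \<Rightarrow> ((nat \<times> nat) list \<Rightarrow> real) \<Rightarrow> real" where
  "level_sum \<mu> K H h B = (\<Sum>T\<in>bounded_trees K H. gw_weight \<mu> T * (\<Sum>u\<in>{u \<in> T. length u = h}. B (spine T u)))"

lemma level_sum_nonneg:
  assumes "\<forall>k. 0 \<le> \<mu> k" "\<forall>s. 0 \<le> B s" shows "0 \<le> level_sum \<mu> K H h B"
  unfolding level_sum_def using assms gw_weight_nonneg by (intro sum_nonneg mult_nonneg_nonneg) auto

text \<open>First-generation decomposition: the marked individual descends from the \<open>i\<close>-th of the \<open>k\<close>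
  children of the root, and the other \<open>k - 1\<close> subtrees only contribute their total mass.\<close>
lemma level_sum_Suc:
  fixes \<mu> :: "nat \<Rightarrow> real" and K H :: nat
  defines "m \<equiv> (\<Sum>T\<in>bounded_trees K H. gw_weight \<mu> T)"
  shows "level_sum \<mu> K (Suc H) (Suc h) B
    = (\<Sum>k\<le>K. \<mu> k * (\<Sum>i<k. m ^ (k - 1) * level_sum \<mu> K H h (\<lambda>s. B ((k, Suc i) # s))))"
proof -
  define G where "G k i S = (\<Sum>w\<in>{w \<in> S. length w = h}. B ((k, Suc i) # spine S w))" for k i S
  have "level_sum \<mu> K (Suc H) (Suc h) B
    = (\<Sum>k\<le>K. \<Sum>ts\<in>tuples (bounded_trees K H) k. \<mu> k * (\<Sum>i<k. prod_list (map (gw_weight \<mu>) ts) * G k i (ts ! i)))"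
    unfolding level_sum_def sum_bounded_trees_Suc
  proof (intro sum.cong refl)
    fix k ts assume "ts \<in> tuples (bounded_trees K H) k"
    then have pl: "\<forall>t\<in>set ts. planar_tree t" and l: "length ts = k"
      by (auto simp: tuples_def bounded_trees_def)
    show "gw_weight \<mu> (graft ts) * (\<Sum>u\<in>{u \<in> graft ts. length u = Suc h}. B (spine (graft ts) u))
      = \<mu> k * (\<Sum>i<k. prod_list (map (gw_weight \<mu>) ts) * G k i (ts ! i))"
      unfolding sum_level_graft[OF pl] gw_weight_graft[OF pl] l G_def
      by (simp add: sum_distrib_left mult.assoc)
  qed
  also have "\<dots> = (\<Sum>k\<le>K. \<mu> k * (\<Sum>i<k. \<Sum>ts\<in>tuples (bounded_trees K H) k. prod_list (map (gw_weight \<mu>) ts) * G k i (ts ! i)))"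
    by (simp add: sum_distrib_left sum.swap[of _ "{..<_}"])
  also have "\<dots> = (\<Sum>k\<le>K. \<mu> k * (\<Sum>i<k. m ^ (k - 1) * level_sum \<mu> K H h (\<lambda>s. B ((k, Suc i) # s))))"
    by (simp add: sum_tuples_prod_list_nth finite_bounded_trees m_def) (simp add: level_sum_def G_def)
  finally show ?thesis .
qed

lemma level_sum_root: "level_sum \<mu> K H 0 B = (\<Sum>T\<in>bounded_trees K H. gw_weight \<mu> T) * B []"
proof -
  have "\<And>T. T \<in> bounded_trees K H \<Longrightarrow> {u \<in> T. length u = 0} = {[]}"
    by (auto simp: bounded_trees_def planar_tree_def)
  then show ?thesis by (simp add: level_sum_def sum_distrib_right spine_def)
qed

lemma level_sum_height_0: "level_sum \<mu> K 0 (Suc h) B = 0"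
proof -
  have "{u \<in> T. length u = Suc h} = {}" if "T \<in> bounded_trees K 0" for T
    using that by (auto simp: bounded_trees_def)
  then show ?thesis
    unfolding level_sum_def by (metis (no_types, lifting) sum.empty mult_zero_right sum.neutral)
qed

text \<open>The many-to-one formula; it is only an inequality because the trees are cut at height \<open>H\<close>.\<close>
lemma level_sum_le_spine_exp:
  assumes \<mu>: "\<forall>k. 0 \<le> \<mu> k" "(\<Sum>k\<le>K. \<mu> k) \<le> 1" and B: "\<forall>s. 0 \<le> B s"
  shows "level_sum \<mu> K H h B \<le> spine_exp \<mu> K h B"
  using B
proof (induction h arbitrary: H B)
  case 0
  have "level_sum \<mu> K H 0 B \<le> 1 * B []"
    unfolding level_sum_root using gw_mass_bounded_trees_le_1[OF \<mu>, of H] 0 by (intro mult_right_mono) auto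
  then show ?case by simp
next
  case (Suc h)
  show ?case
  proof (cases H)
    case 0
    then show ?thesis using spine_exp_nonneg[OF \<mu>(1) Suc.prems, of K "Suc h"] by (simp add: level_sum_height_0)
  next
    case (Suc H')
    define m where "m = (\<Sum>T\<in>bounded_trees K H'. gw_weight \<mu> T)"
    have m: "0 \<le> m" "m \<le> 1"
      using gw_mass_bounded_trees_le_1[OF \<mu>] gw_weight_nonneg[OF \<mu>(1)] by (simp_all add: m_def sum_nonneg)
    have "m ^ (k - 1) * level_sum \<mu> K H' h (\<lambda>s. B ((k, Suc i) # s))
        \<le> spine_exp \<mu> K h (\<lambda>s. B ((k, Suc i) # s))" for k i
    proof -
      have "0 \<le> level_sum \<mu> K H' h (\<lambda>s. B ((k, Suc i) # s))"
        using level_sum_nonneg[OF \<mu>(1)] Suc.prems by simp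
      then have "m ^ (k - 1) * level_sum \<mu> K H' h (\<lambda>s. B ((k, Suc i) # s))
          \<le> level_sum \<mu> K H' h (\<lambda>s. B ((k, Suc i) # s))"
        using m by (simp add: mult_left_le_one_le power_le_one)
      also have "\<dots> \<le> spine_exp \<mu> K h (\<lambda>s. B ((k, Suc i) # s))"
        using Suc.IH Suc.prems by simp
      finally show ?thesis .
    qed
    then show ?thesis
      unfolding \<open>H = Suc H'\<close> level_sum_Suc m_def[symmetric]
      by (simp, intro sum_mono mult_left_mono) (auto simp: \<mu>)
  qed
qed

lemma count_list_drop:
  "count_list (drop d xs) p = card {t. d \<le> t \<and> t < length xs \<and> xs ! t = p}"
proof -
  have "count_list (drop d xs) p = card {i. i < length (drop d xs) \<and> drop d xs ! i = p}"
    by (simp add: count_list_eq_length_filter length_filter_conv_card eq_commute)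
  also have "\<dots> = card ((\<lambda>i. d + i) ` {i. i < length (drop d xs) \<and> drop d xs ! i = p})"
    by (rule card_image[symmetric]) (auto simp: inj_on_def)
  also have "(\<lambda>i. d + i) ` {i. i < length (drop d xs) \<and> drop d xs ! i = p} = {t. d \<le> t \<and> t < length xs \<and> xs ! t = p}"
  proof
    show "{t. d \<le> t \<and> t < length xs \<and> xs ! t = p} \<subseteq> (\<lambda>i. d + i) ` {i. i < length (drop d xs) \<and> drop d xs ! i = p}"
    proof
      fix t assume "t \<in> {t. d \<le> t \<and> t < length xs \<and> xs ! t = p}"
      then show "t \<in> (\<lambda>i. d + i) ` {i. i < length (drop d xs) \<and> drop d xs ! i = p}"
        by (intro image_eqI[of _ _ "t - d"]) auto
    qed
  qed auto
  finally show ?thesis .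
qed

lemma A_count_l_eq_count_list:
  assumes pl: "planar_tree T" and u: "u \<in> T"
  shows "A_count_l T u l k j = count_list (drop (length u - l) (spine T u)) (k, j)"
proof -
  define S where "S = {t. length u - l \<le> t \<and> t < length u \<and> spine T u ! t = (k, j)}"
  have S: "t \<in> S \<longleftrightarrow> t < length u \<and> nchildren T (take t u) = k \<and> u ! t = j \<and> length u - t \<le> l" for t
    unfolding S_def spine_def by auto
  have "{v. v \<in> T \<and> nchildren T v = k \<and> (\<exists>w. u = v @ j # w) \<and> length u - length v \<le> l} = (\<lambda>t. take t u) ` S"
  proof
    show "{v. v \<in> T \<and> nchildren T v = k \<and> (\<exists>w. u = v @ j # w) \<and> length u - length v \<le> l} \<subseteq> (\<lambda>t. take t u) ` S"
    proof
      fix v assume v: "v \<in> {v. v \<in> T \<and> nchildren T v = k \<and> (\<exists>w. u = v @ j # w) \<and> length u - length v \<le> l}"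
      then obtain w where "u = v @ j # w" by blast
      then have "length v \<in> S" "take (length v) u = v" using v S by auto
      then show "v \<in> (\<lambda>t. take t u) ` S" by (metis image_eqI)
    qed
    show "(\<lambda>t. take t u) ` S \<subseteq> {v. v \<in> T \<and> nchildren T v = k \<and> (\<exists>w. u = v @ j # w) \<and> length u - length v \<le> l}"
    proof
      fix v assume "v \<in> (\<lambda>t. take t u) ` S"
      then obtain t where t: "t \<in> S" "v = take t u" by blast
      then have "t < length u" "u ! t = j" using S by auto
      then have "u = v @ j # drop (Suc t) u" using t(2) id_take_nth_drop by metis
      then show "v \<in> {v. v \<in> T \<and> nchildren T v = k \<and> (\<exists>w. u = v @ j # w) \<and> length u - length v \<le> l}"
        using t S planar_tree_take[OF pl u] by auto
    qed
  qed
  moreover have "inj_on (\<lambda>t. take t u) S"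
    by (rule inj_onI) (metis S length_take min.absorb4)
  ultimately have "A_count_l T u l k j = card S" unfolding A_count_l_def by (simp add: card_image)
  then show ?thesis unfolding count_list_drop S_def by (simp add: spine_def)
qed


subsection \<open>A Chernoff bound along the spine\<close>

lemma critical_mu_le_1:
  assumes "\<forall>k. 0 \<le> \<mu> k" "(\<Sum>k\<le>K. real k * \<mu> k) = 1" "1 \<le> k0" "k0 \<le> K"
  shows "\<mu> k0 \<le> 1"
proof -
  have "1 * \<mu> k0 \<le> real k0 * \<mu> k0" using assms by (intro mult_right_mono) auto
  also have "\<dots> \<le> (\<Sum>k\<le>K. real k * \<mu> k)" using assms by (intro member_le_sum) auto
  finally show ?thesis using assms(2) by simp
qed

lemma exp_le_quadratic:
  fixes x :: real assumes "\<bar>x\<bar> \<le> 1" shows "exp x \<le> 1 + x + x\<^sup>2"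
proof (cases "0 \<le> x")
  case True then show ?thesis using exp_bound assms by auto
next
  case False
  have "exp x * (1 - x) \<le> exp x * exp (-x)"
    using exp_ge_add_one_self[of "-x"] by (intro mult_left_mono) auto
  also have "\<dots> = 1" by (simp add: exp_minus)
  also have "1 \<le> (1 + x + x\<^sup>2) * (1 - x)"
  proof -
    have "x * x * x \<le> 0" using False by (simp add: mult_nonneg_nonpos)
    then show ?thesis by (simp add: power2_eq_square algebra_simps)
  qed
  finally show ?thesis using False by simp
qed

text \<open>Under the spine law a given mark \<open>(k\<^sub>0, j\<^sub>0)\<close> has probability \<open>\<mu> k\<^sub>0\<close>.\<close>
lemma spine_step_indicator:
  fixes a b :: real
  assumes "(\<Sum>k\<le>K. real k * \<mu> k) = 1" "1 \<le> j0" "j0 \<le> k0" "k0 \<le> K"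
  shows "(\<Sum>k\<le>K. \<mu> k * (\<Sum>i<k. a + (if (k, Suc i) = (k0, j0) then b else 0))) = a + \<mu> k0 * b"
proof -
  have inner: "(\<Sum>i<k. (if (k, Suc i) = (k0, j0) then b else 0)) = (if k = k0 then b else 0)" for k
  proof (cases "k = k0")
    case True
    then have "(\<Sum>i<k. (if (k, Suc i) = (k0, j0) then b else 0)) = (\<Sum>i<k. (if i = j0 - 1 then b else 0))"
      using assms(2) by (intro sum.cong refl) auto
    then show ?thesis using True assms(2,3) by auto
  qed simp
  have "(\<Sum>k\<le>K. \<mu> k * (\<Sum>i<k. a + (if (k, Suc i) = (k0, j0) then b else 0)))
      = (\<Sum>k\<le>K. \<mu> k * (real k * a + (if k = k0 then b else 0)))"
    by (intro sum.cong refl) (simp only: sum.distrib inner, simp)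
  also have "\<dots> = (\<Sum>k\<le>K. real k * \<mu> k) * a + (\<Sum>k\<le>K. \<mu> k * (if k = k0 then b else 0))"
    by (simp add: distrib_left sum.distrib sum_distrib_right mult.commute mult.left_commute)
      (simp add: sum_distrib_left)
  also have "(\<Sum>k\<le>K. \<mu> k * (if k = k0 then b else 0)) = \<mu> k0 * b"
    using assms(4) by (simp add: if_distrib cong: if_cong)
  finally show ?thesis using assms(1) by simp
qed

lemma exp_count_list:
  "exp (l * (real (count_list s p) - q * real (length s)))
    = prod_list (map (\<lambda>x. exp (l * ((if x = p then 1 else 0) - q))) s)"
proof (induction s)
  case (Cons x s)
  have "l * (real (count_list (x # s) p) - q * real (length (x # s)))
      = l * ((if x = p then 1 else 0) - q) + l * (real (count_list s p) - q * real (length s))"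
    by (simp add: algebra_simps)
  then show ?case using Cons by (simp add: exp_add)
qed simp

lemma spine_exp_mgf_le:
  assumes \<mu>: "\<forall>k. 0 \<le> \<mu> k" "(\<Sum>k\<le>K. real k * \<mu> k) = 1"
    and p: "1 \<le> j0" "j0 \<le> k0" "k0 \<le> K" and l: "\<bar>l\<bar> \<le> 1"
  shows "spine_exp \<mu> K h (\<lambda>s. exp (l * (real (count_list s (k0, j0)) - \<mu> k0 * real (length s))))
    \<le> exp (real h * l\<^sup>2)"
proof -
  define q where "q = \<mu> k0"
  have q: "0 \<le> q" "q \<le> 1" using \<mu> p critical_mu_le_1[OF \<mu>, of k0] by (simp_all add: q_def)
  define M where "M = q * exp (l * (1 - q)) + (1 - q) * exp (l * (0 - q))"
  have "M \<le> q * (1 + l * (1 - q) + (l * (1 - q))\<^sup>2) + (1 - q) * (1 + l * (0 - q) + (l * (0 - q))\<^sup>2)"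
    unfolding M_def using q l
    by (intro add_mono mult_left_mono exp_le_quadratic) (auto simp: abs_mult mult_le_one)
  also have "\<dots> = 1 + l\<^sup>2 * (q * (1 - q))"
    by (simp add: power2_eq_square algebra_simps)
  also have "\<dots> \<le> 1 + l\<^sup>2"
    using q by (simp add: mult_left_le mult_le_one)
  also have "\<dots> \<le> exp (l\<^sup>2)" by (rule exp_ge_add_one_self)
  finally have M: "M \<le> exp (l\<^sup>2)" .
  have "spine_exp \<mu> K h (\<lambda>s. exp (l * (real (count_list s (k0, j0)) - q * real (length s))))
      = (\<Sum>k\<le>K. \<mu> k * (\<Sum>i<k. exp (l * ((if (k, Suc i) = (k0, j0) then 1 else 0) - q)))) ^ h"
    unfolding exp_count_list by (rule spine_exp_prod_list)
  also have "(\<Sum>k\<le>K. \<mu> k * (\<Sum>i<k. exp (l * ((if (k, Suc i) = (k0, j0) then 1 else 0) - q))))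
      = (\<Sum>k\<le>K. \<mu> k * (\<Sum>i<k. exp (l * (0 - q))
          + (if (k, Suc i) = (k0, j0) then exp (l * (1 - q)) - exp (l * (0 - q)) else 0)))"
    by (intro sum.cong refl arg_cong[where f="\<lambda>x. _ * x"]) auto
  also have "\<dots> = M"
    unfolding spine_step_indicator[OF \<mu>(2) p] M_def q_def by (simp add: algebra_simps)
  also have "M ^ h \<le> exp (l\<^sup>2) ^ h"
    using q M unfolding M_def by (intro power_mono) simp_all
  finally show ?thesis by (simp add: q_def exp_of_nat_mult[symmetric])
qed

lemma indicator_le_exp_sum:
  fixes l t y :: real assumes "0 < l"
  shows "(if t \<le> \<bar>y\<bar> then 1 else 0) \<le> exp (l * y - l * t) + exp ((- l) * y - l * t)"
proof (cases "t \<le> \<bar>y\<bar>")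
  case True
  then have "l * t \<le> l * y \<or> l * t \<le> (- l) * y"
    using assms mult_left_mono[of t y l] mult_left_mono[of t "- y" l] by (cases "0 \<le> y") auto
  then have "1 \<le> exp (l * y - l * t) \<or> 1 \<le> exp ((- l) * y - l * t)" by auto
  then show ?thesis using True by (smt (verit) exp_gt_zero)
qed (simp add: add_pos_pos)

lemma spine_exp_deviation_le:
  assumes \<mu>: "\<forall>k. 0 \<le> \<mu> k" "(\<Sum>k\<le>K. real k * \<mu> k) = 1"
    and p: "1 \<le> j0" "j0 \<le> k0" "k0 \<le> K" and h: "1 \<le> h" and t: "0 < t"
  shows "spine_exp \<mu> K h (\<lambda>s. if t \<le> \<bar>real (count_list s (k0, j0)) - \<mu> k0 * real h\<bar> then 1 else 0)
    \<le> 2 * exp (- (t\<^sup>2 / (4 * real h)))"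
proof -
  let ?B = "\<lambda>s. if t \<le> \<bar>real (count_list s (k0, j0)) - \<mu> k0 * real h\<bar> then 1 else (0::real)"
  define Y where "Y s = real (count_list s (k0, j0)) - \<mu> k0 * real (length s)" for s
  have hpos: "0 < real h" using h by simp
  show ?thesis
  proof (cases "2 * real h < t")
    case True
    have "?B s \<le> 0" if "length s = h" for s
    proof -
      have "real (count_list s (k0, j0)) \<le> real h" using count_le_length[of s] that by simp
      moreover have "0 \<le> \<mu> k0 * real h" "\<mu> k0 * real h \<le> real h"
        using critical_mu_le_1[OF \<mu> p(1)[THEN order_trans, OF p(2)] p(3)] \<mu>(1) hpos
        by (simp_all add: mult_le_cancel_right1)
      ultimately show ?thesis using True by auto
    qed
    then have "spine_exp \<mu> K h ?B \<le> spine_exp \<mu> K h (\<lambda>_. 0)" by (intro spine_exp_mono[OF \<mu>(1)]) auto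
    then show ?thesis using spine_exp_const[OF \<mu>(2), of h 0] by (smt (verit) exp_gt_zero)
  next
    case False
    define l where "l = t / (2 * real h)"
    have l: "0 < l" "l \<le> 1" using t False hpos by (simp_all add: l_def)
    have "?B s \<le> exp (l * Y s - l * t) + exp ((- l) * Y s - l * t)" if "length s = h" for s
      using indicator_le_exp_sum[OF l(1), of t "Y s"] that by (simp add: Y_def)
    then have "spine_exp \<mu> K h ?B
        \<le> spine_exp \<mu> K h (\<lambda>s. exp (l * Y s - l * t) + exp ((- l) * Y s - l * t))"
      by (intro spine_exp_mono[OF \<mu>(1)]) auto
    also have "\<dots> = spine_exp \<mu> K h (\<lambda>s. exp (- l * t) * exp (l * Y s) + exp (- l * t) * exp ((- l) * Y s))"
    proof -
      have "exp (x - l * t) = exp (- l * t) * exp x" for x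
        by (simp add: exp_add[symmetric] algebra_simps)
      then show ?thesis by (simp only:)
    qed
    also have "\<dots> = exp (- l * t) * (spine_exp \<mu> K h (\<lambda>s. exp (l * Y s)) + spine_exp \<mu> K h (\<lambda>s. exp ((- l) * Y s)))"
      by (simp only: spine_exp_add spine_exp_cmult distrib_left)
    also have "\<dots> \<le> exp (- l * t) * (exp (real h * l\<^sup>2) + exp (real h * l\<^sup>2))"
      using l spine_exp_mgf_le[OF \<mu> p, of l h] spine_exp_mgf_le[OF \<mu> p, of "- l" h]
      unfolding Y_def by (intro mult_left_mono add_mono) simp_all
    also have "\<dots> = 2 * exp (real h * l\<^sup>2 - l * t)" by (simp add: exp_diff exp_minus field_simps)
    also have "real h * l\<^sup>2 - l * t = - (t\<^sup>2 / (4 * real h))"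
      unfolding l_def using hpos by (simp add: power2_eq_square field_simps)
    finally show ?thesis .
  qed
qed

lemma spine_exp_log_deviation_le:
  assumes \<mu>: "\<forall>k. 0 \<le> \<mu> k" "(\<Sum>k\<le>K. real k * \<mu> k) = 1"
    and p: "1 \<le> j0" "j0 \<le> k0" "k0 \<le> K" and h: "1 \<le> h" and g: "0 < \<gamma>" and n: "2 \<le> n"
  shows "spine_exp \<mu> K h (\<lambda>s. if \<gamma> * sqrt (real h * ln (real n)) \<le> \<bar>real (count_list s (k0, j0)) - \<mu> k0 * real h\<bar>
      then 1 else 0) \<le> 2 * real n powr (- (\<gamma>\<^sup>2 / 4))"
proof -
  have ln0: "0 < ln (real n)" and hp: "0 < real h" using n h by simp_all
  have "exp (- ((\<gamma> * sqrt (real h * ln (real n)))\<^sup>2 / (4 * real h))) = real n powr (- (\<gamma>\<^sup>2 / 4))"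
    using ln0 hp n by (simp add: power_mult_distrib powr_def)
  moreover have "0 < \<gamma> * sqrt (real h * ln (real n))" using g ln0 hp by simp
  ultimately show ?thesis
    using spine_exp_deviation_le[OF \<mu> p h, of "\<gamma> * sqrt (real h * ln (real n))"] by (simp only:)
qed


lemma gw_mass_le_sum_spine_exp:
  assumes \<mu>: "\<forall>k. 0 \<le> \<mu> k" "(\<Sum>k\<le>K. \<mu> k) \<le> 1" "\<forall>k>K. \<mu> k = 0"
    and B: "\<forall>i s. 0 \<le> B i s"
    and cover: "\<forall>T\<in>bounded_trees K n. E T \<longrightarrow> 1 \<le> (\<Sum>i\<in>I. \<Sum>u\<in>{u \<in> T. length u = h i}. B i (spine T u))"
  shows "(\<Sum>T\<in>{T\<in>trees_of_size (Suc n). E T}. gw_weight \<mu> T) \<le> (\<Sum>i\<in>I. spine_exp \<mu> K (h i) (B i))"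
proof -
  define S where "S T = (\<Sum>i\<in>I. \<Sum>u\<in>{u \<in> T. length u = h i}. B i (spine T u))" for T
  have S0: "0 \<le> S T" for T unfolding S_def using B by (intro sum_nonneg) auto
  have w0: "0 \<le> gw_weight \<mu> T" for T by (rule gw_weight_nonneg[OF \<mu>(1)])
  have "(\<Sum>T\<in>{T\<in>trees_of_size (Suc n). E T}. gw_weight \<mu> T)
      = (\<Sum>T\<in>{T\<in>trees_of_size (Suc n). E T \<and> gw_weight \<mu> T \<noteq> 0}. gw_weight \<mu> T)"
    by (rule sum.mono_neutral_right) (use finite_trees_of_size in auto)
  also have "\<dots> \<le> (\<Sum>T\<in>{T\<in>bounded_trees K n. E T}. gw_weight \<mu> T)"
    using trees_of_size_in_bounded_trees[OF _ _ \<mu>(3)]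
    by (intro sum_mono2) (auto simp: finite_bounded_trees w0)
  also have "\<dots> \<le> (\<Sum>T\<in>{T\<in>bounded_trees K n. E T}. gw_weight \<mu> T * S T)"
  proof (rule sum_mono)
    fix T assume "T \<in> {T\<in>bounded_trees K n. E T}"
    then have "gw_weight \<mu> T * 1 \<le> gw_weight \<mu> T * S T"
      using cover w0 unfolding S_def by (intro mult_left_mono) auto
    then show "gw_weight \<mu> T \<le> gw_weight \<mu> T * S T" by simp
  qed
  also have "\<dots> \<le> (\<Sum>T\<in>bounded_trees K n. gw_weight \<mu> T * S T)"
    by (rule sum_mono2) (auto simp: finite_bounded_trees w0 S0)
  also have "\<dots> = (\<Sum>i\<in>I. level_sum \<mu> K n (h i) (B i))"
    unfolding S_def level_sum_def by (simp add: sum_distrib_left sum.swap[of _ I])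
  also have "\<dots> \<le> (\<Sum>i\<in>I. spine_exp \<mu> K (h i) (B i))"
    using \<mu>(1,2) B by (intro sum_mono level_sum_le_spine_exp) auto
  finally show ?thesis .
qed

definition A_deviation :: "(nat \<Rightarrow> real) \<Rightarrow> nat \<Rightarrow> real \<Rightarrow> nat \<Rightarrow> nat list set \<Rightarrow> bool" where
  "A_deviation \<mu> K \<gamma> n = (\<lambda>T. \<exists>k j u. 1 \<le> j \<and> j \<le> k \<and> k \<le> K \<and> u \<in> T - {[]} \<and>
     \<bar>real (A_count T u k j) - \<mu> k * real (length u)\<bar> \<ge> \<gamma> * sqrt (real (length u) * ln (real n)))"

definition A_l_deviation :: "(nat \<Rightarrow> real) \<Rightarrow> nat \<Rightarrow> real \<Rightarrow> nat \<Rightarrow> nat list set \<Rightarrow> bool" where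
  "A_l_deviation \<mu> K \<gamma> n = (\<lambda>T. \<exists>k j u l. 1 \<le> j \<and> j \<le> k \<and> k \<le> K \<and> u \<in> T \<and> 0 < l \<and> l \<le> length u \<and>
     \<bar>real (A_count_l T u l k j) - \<mu> k * real l\<bar> \<ge> \<gamma> * sqrt (real l * ln (real n)))"

lemma A_count_l_length: "A_count_l T u (length u) k j = A_count T u k j"
  by (simp add: A_count_def A_count_l_def)

lemma A_deviation_imp_A_l_deviation:
  assumes "A_deviation \<mu> K \<gamma> n T" shows "A_l_deviation \<mu> K \<gamma> n T"
proof -
  obtain k j u where "1 \<le> j" "j \<le> k" "k \<le> K" "u \<in> T" "u \<noteq> []"
    "\<bar>real (A_count T u k j) - \<mu> k * real (length u)\<bar> \<ge> \<gamma> * sqrt (real (length u) * ln (real n))"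
    using assms unfolding A_deviation_def by blast
  then show ?thesis unfolding A_l_deviation_def
    by (intro exI[of _ k] exI[of _ j] exI[of _ u] exI[of _ "length u"]) (simp add: A_count_l_length)
qed

definition deviation_indicator :: "(nat \<Rightarrow> real) \<Rightarrow> real \<Rightarrow> nat \<Rightarrow> nat \<times> nat \<times> nat \<times> nat \<Rightarrow> (nat \<times> nat) list \<Rightarrow> real"
  where "deviation_indicator \<mu> \<gamma> n = (\<lambda>(k, j, h, l) s. if 1 \<le> j \<and> j \<le> k \<and> l \<le> h \<and>
    \<gamma> * sqrt (real l * ln (real n)) \<le> \<bar>real (count_list (drop (h - l) s) (k, j)) - \<mu> k * real l\<bar> then 1 else 0)"

lemma spine_exp_deviation_indicator_le:
  assumes \<mu>: "\<forall>k. 0 \<le> \<mu> k" "(\<Sum>k\<le>K. real k * \<mu> k) = 1"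
    and "k \<le> K" "1 \<le> l" and g: "0 < \<gamma>" and n: "2 \<le> n"
  shows "spine_exp \<mu> K h (deviation_indicator \<mu> \<gamma> n (k, j, h, l)) \<le> 2 * real n powr (- (\<gamma>\<^sup>2 / 4))"
proof (cases "1 \<le> j \<and> j \<le> k \<and> l \<le> h")
  case True
  let ?f = "\<lambda>s. if \<gamma> * sqrt (real l * ln (real n)) \<le> \<bar>real (count_list s (k, j)) - \<mu> k * real l\<bar>
    then 1 else (0::real)"
  have "spine_exp \<mu> K h (deviation_indicator \<mu> \<gamma> n (k, j, h, l)) = spine_exp \<mu> K ((h - l) + l) (\<lambda>s. ?f (drop (h - l) s))"
    using True by (simp add: deviation_indicator_def)
  also have "\<dots> = spine_exp \<mu> K l ?f" by (rule spine_exp_drop[OF \<mu>(2)])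
  also have "\<dots> \<le> 2 * real n powr (- (\<gamma>\<^sup>2 / 4))"
    using True assms by (intro spine_exp_log_deviation_le[OF \<mu> _ _ _ _ g n]) auto
  finally show ?thesis .
next
  case False
  then have "deviation_indicator \<mu> \<gamma> n (k, j, h, l) = (\<lambda>s. 0)" by (auto simp: deviation_indicator_def)
  then show ?thesis using spine_exp_const[OF \<mu>(2), of h 0] by simp
qed

lemma A_l_deviation_covered:
  assumes T: "T \<in> bounded_trees K n" and dev: "A_l_deviation \<mu> K \<gamma> n T"
  shows "1 \<le> (\<Sum>(k, j, h, l)\<in>{..K} \<times> {..K} \<times> {1..n} \<times> {1..n}.
    \<Sum>u\<in>{u \<in> T. length u = h}. deviation_indicator \<mu> \<gamma> n (k, j, h, l) (spine T u))"
proof -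
  let ?F = "\<lambda>(k, j, h, l). \<Sum>u\<in>{u \<in> T. length u = h}. deviation_indicator \<mu> \<gamma> n (k, j, h, l) (spine T u)"
  obtain k j u l where kjul: "1 \<le> j" "j \<le> k" "k \<le> K" "u \<in> T" "0 < l" "l \<le> length u"
    "\<gamma> * sqrt (real l * ln (real n)) \<le> \<bar>real (A_count_l T u l k j) - \<mu> k * real l\<bar>"
    using dev unfolding A_l_deviation_def by blast
  have pl: "planar_tree T" and "length u \<le> n" using T kjul(4) by (auto simp: bounded_trees_def)
  then have i: "(k, j, length u, l) \<in> {..K} \<times> {..K} \<times> {1..n} \<times> {1..n}" using kjul by auto
  have nonneg: "0 \<le> deviation_indicator \<mu> \<gamma> n i s" for i s
    by (simp add: deviation_indicator_def split: prod.split)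
  have "1 = deviation_indicator \<mu> \<gamma> n (k, j, length u, l) (spine T u)"
    using kjul A_count_l_eq_count_list[OF pl kjul(4)] by (simp add: deviation_indicator_def)
  also have "\<dots> \<le> ?F (k, j, length u, l)"
  proof -
    have "finite {w \<in> T. length w = length u}" using pl by (simp add: planar_tree_def)
    then show ?thesis
      using member_le_sum[of u _ "\<lambda>w. deviation_indicator \<mu> \<gamma> n (k, j, length u, l) (spine T w)"] kjul(4) nonneg
      by simp
  qed
  also have "\<dots> \<le> (\<Sum>i\<in>{..K} \<times> {..K} \<times> {1..n} \<times> {1..n}. ?F i)"
    using member_le_sum[OF i, of ?F] nonneg by (simp add: sum_nonneg split: prod.split)
  finally show ?thesis .
qed

lemma gw_mass_A_l_deviation_le:
  assumes \<mu>: "\<forall>k. 0 \<le> \<mu> k" "(\<Sum>k\<le>K. \<mu> k) \<le> 1" "\<forall>k>K. \<mu> k = 0" "(\<Sum>k\<le>K. real k * \<mu> k) = 1"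
    and g: "0 < \<gamma>" and n: "2 \<le> n"
  shows "(\<Sum>T\<in>{T\<in>trees_of_size (Suc n). A_l_deviation \<mu> K \<gamma> n T}. gw_weight \<mu> T)
    \<le> real ((K + 1)\<^sup>2 * n\<^sup>2) * (2 * real n powr (- (\<gamma>\<^sup>2 / 4)))"
proof -
  let ?I = "{..K} \<times> {..K} \<times> {1..n} \<times> {1..n}"
  have "(\<Sum>T\<in>{T\<in>trees_of_size (Suc n). A_l_deviation \<mu> K \<gamma> n T}. gw_weight \<mu> T)
      \<le> (\<Sum>i\<in>?I. spine_exp \<mu> K ((\<lambda>(k, j, h, l). h) i) (deviation_indicator \<mu> \<gamma> n i))"
    using A_l_deviation_covered
    by (intro gw_mass_le_sum_spine_exp[OF \<mu>(1-3)])
      (auto simp: deviation_indicator_def case_prod_unfold split: prod.split)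
  also have "\<dots> \<le> (\<Sum>i\<in>?I. 2 * real n powr (- (\<gamma>\<^sup>2 / 4)))"
    by (intro sum_mono) (auto intro: spine_exp_deviation_indicator_le[OF \<mu>(1,4) _ _ g n])
  also have "\<dots> = real ((K + 1)\<^sup>2 * n\<^sup>2) * (2 * real n powr (- (\<gamma>\<^sup>2 / 4)))"
    by (simp add: card_cartesian_product power2_eq_square algebra_simps)
  finally show ?thesis .
qed


definition forests :: "nat \<Rightarrow> nat \<Rightarrow> nat \<Rightarrow> nat list set list set" where
  "forests K m N = {ts \<in> tuples (bounded_trees K N) m. sum_list (map card ts) = N}"

definition forest_weight :: "(nat \<Rightarrow> real) \<Rightarrow> nat \<Rightarrow> nat \<Rightarrow> nat \<Rightarrow> real" where
  "forest_weight \<mu> K m N = (\<Sum>ts\<in>forests K m N. prod_list (map (gw_weight \<mu>) ts))"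

lemma finite_forests: "finite (forests K m N)"
  unfolding forests_def using finite_tuples[OF finite_bounded_trees] by simp

lemma forest_weight_nonneg: "\<forall>k. 0 \<le> \<mu> k \<Longrightarrow> 0 \<le> forest_weight \<mu> K m N"
  unfolding forest_weight_def by (intro sum_nonneg prod_list_nonneg) (auto simp: gw_weight_nonneg)

lemma forest_weight_0_0: "forest_weight \<mu> K 0 0 = 1"
proof -
  have "forests K 0 0 = {[]}" by (auto simp: forests_def tuples_def)
  then show ?thesis by (simp add: forest_weight_def)
qed

lemma forest_weight_1: "forest_weight \<mu> K 1 N = (\<Sum>T\<in>{T\<in>bounded_trees K N. card T = N}. gw_weight \<mu> T)"
proof -
  have "forests K 1 N = (\<lambda>T. [T]) ` {T\<in>bounded_trees K N. card T = N}"
    by (auto simp: forests_def tuples_def length_Suc_conv)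
  moreover have "inj_on (\<lambda>T. [T]) {T\<in>bounded_trees K N. card T = N}" by (auto simp: inj_on_def)
  ultimately show ?thesis unfolding forest_weight_def by (simp add: sum.reindex)
qed

lemma forest_weight_1_le_gw_size_prob:
  "\<forall>k. 0 \<le> \<mu> k \<Longrightarrow> forest_weight \<mu> K 1 (Suc n) \<le> gw_size_prob \<mu> n"
  unfolding forest_weight_1 gw_size_prob_def
  by (intro sum_mono2 finite_trees_of_size)
    (auto simp: trees_of_size_def bounded_trees_def gw_weight_nonneg)

definition graft_prefix :: "nat \<Rightarrow> nat list set list \<Rightarrow> nat list set list" where
  "graft_prefix k ts = graft (take k ts) # drop k ts"

lemma graft_prefix_mem_forests:
  assumes "k \<le> K" "ts \<in> forests K (m - 1 + k) N" "1 \<le> m"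
  shows "graft_prefix k ts \<in> forests K m (Suc N)"
proof -
  have len: "length ts = m - 1 + k" and setts: "set ts \<subseteq> bounded_trees K N"
    and sc: "sum_list (map card ts) = N"
    using assms(2) by (auto simp: forests_def tuples_def)
  have "take k ts \<in> tuples (bounded_trees K N) k"
    using len setts by (auto simp: tuples_def dest: in_set_takeD)
  then have "graft (take k ts) \<in> bounded_trees K (Suc N)" using bounded_trees_Suc assms(1) by blast
  moreover have "set (drop k ts) \<subseteq> bounded_trees K (Suc N)"
    using setts bounded_trees_mono[of N "Suc N" K] by (auto dest: in_set_dropD)
  moreover have "\<forall>t\<in>set (take k ts). finite t"
    using setts by (auto simp: bounded_trees_def planar_tree_def dest!: in_set_takeD)
  then have "sum_list (map card (graft_prefix k ts))
      = Suc (sum_list (map card (take k ts)) + sum_list (map card (drop k ts)))"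
    by (simp add: graft_prefix_def card_graft)
  then have "sum_list (map card (graft_prefix k ts)) = Suc N"
    using sc by (metis append_take_drop_id map_append sum_list_append)
  ultimately show ?thesis using len assms(3) by (auto simp: forests_def tuples_def graft_prefix_def)
qed

lemma gw_weight_graft_prefix:
  assumes "ts \<in> forests K (m - 1 + k) N"
  shows "prod_list (map (gw_weight \<mu>) (graft_prefix k ts)) = \<mu> k * prod_list (map (gw_weight \<mu>) ts)"
proof -
  have "\<forall>t\<in>set (take k ts). planar_tree t" "length (take k ts) = k"
    using assms by (auto simp: forests_def tuples_def bounded_trees_def dest: in_set_takeD)
  then have "prod_list (map (gw_weight \<mu>) (graft_prefix k ts))
      = \<mu> k * prod_list (map (gw_weight \<mu>) (take k ts)) * prod_list (map (gw_weight \<mu>) (drop k ts))"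
    by (simp add: graft_prefix_def gw_weight_graft)
  also have "\<dots> = \<mu> k * prod_list (map (gw_weight \<mu>) ts)"
    by (simp add: mult.assoc prod_list.append[symmetric] map_append[symmetric] del: prod_list.append map_append)
  finally show ?thesis .
qed

lemma inj_on_graft_prefix:
  "inj_on (\<lambda>(k, ts). graft_prefix k ts) (SIGMA k:{..K}. forests K (m - 1 + k) N)"
proof (rule inj_onI, clarify)
  fix k ts k' ts'
  assume ts: "ts \<in> forests K (m - 1 + k) N" and ts': "ts' \<in> forests K (m - 1 + k') N"
    and eq: "graft_prefix k ts = graft_prefix k' ts'"
  have roots: "\<forall>t\<in>set (take k ts). [] \<in> t" "\<forall>t\<in>set (take k' ts'). [] \<in> t"
    using ts ts' by (auto simp: forests_def tuples_def bounded_trees_def planar_tree_def dest: in_set_takeD)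
  have "take k ts = take k' ts'" and d: "drop k ts = drop k' ts'"
    using eq graft_inj[OF roots] by (auto simp: graft_prefix_def)
  moreover have "length (take k ts) = k" "length (take k' ts') = k'"
    using ts ts' by (auto simp: forests_def tuples_def)
  ultimately have "k = k'" by metis
  then show "k = k' \<and> ts = ts'" using \<open>take k ts = take k' ts'\<close> d by (metis append_take_drop_id)
qed

lemma forest_weight_Suc_ge:
  assumes \<mu>: "\<forall>k. 0 \<le> \<mu> k" and m: "1 \<le> m"
  shows "(\<Sum>k\<le>K. \<mu> k * forest_weight \<mu> K (m - 1 + k) N) \<le> forest_weight \<mu> K m (Suc N)"
proof -
  let ?D = "SIGMA k:{..K}. forests K (m - 1 + k) N"
  have "(\<Sum>k\<le>K. \<mu> k * forest_weight \<mu> K (m - 1 + k) N)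
      = (\<Sum>(k, ts)\<in>?D. \<mu> k * prod_list (map (gw_weight \<mu>) ts))"
    unfolding forest_weight_def by (subst sum.Sigma[symmetric]) (auto simp: finite_forests sum_distrib_left)
  also have "\<dots> = (\<Sum>(k, ts)\<in>?D. prod_list (map (gw_weight \<mu>) (graft_prefix k ts)))"
    by (intro sum.cong refl) (auto simp: gw_weight_graft_prefix)
  also have "\<dots> = (\<Sum>ts\<in>(\<lambda>(k, ts). graft_prefix k ts) ` ?D. prod_list (map (gw_weight \<mu>) ts))"
    by (subst sum.reindex[OF inj_on_graft_prefix]) (simp add: case_prod_unfold)
  also have "\<dots> \<le> forest_weight \<mu> K m (Suc N)"
    unfolding forest_weight_def using graft_prefix_mem_forests[OF _ _ m]
    by (intro sum_mono2 finite_forests prod_list_nonneg) (auto simp: gw_weight_nonneg \<mu>)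
  finally show ?thesis .
qed


subsection \<open>Types of i.i.d.\ samples\<close>

definition compositions :: "nat \<Rightarrow> nat \<Rightarrow> (nat \<Rightarrow> nat) set" where
  "compositions K N = {c. (\<forall>k>K. c k = 0) \<and> (\<Sum>k\<le>K. c k) = N}"

text \<open>The probability that \<open>N\<close> i.i.d.\ draws from \<open>p\<close> take the value \<open>k\<close> exactly \<open>c k\<close> times.\<close>
definition type_mass :: "(nat \<Rightarrow> real) \<Rightarrow> nat \<Rightarrow> nat \<Rightarrow> (nat \<Rightarrow> nat) \<Rightarrow> real" where
  "type_mass p K N c = fact N / (\<Prod>k\<le>K. fact (c k)) * (\<Prod>k\<le>K. p k ^ c k)"

lemma type_mass_nonneg: "\<forall>k. 0 \<le> p k \<Longrightarrow> 0 \<le> type_mass p K N c"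
  unfolding type_mass_def by (intro mult_nonneg_nonneg divide_nonneg_nonneg prod_nonneg) auto

lemma compositions_le:
  assumes "c \<in> compositions K N" shows "c k \<le> N"
proof (cases "k \<le> K")
  case True
  then have "c k \<le> (\<Sum>k\<le>K. c k)" by (intro member_le_sum) auto
  then show ?thesis using assms by (simp add: compositions_def)
qed (use assms in \<open>simp add: compositions_def\<close>)

lemma finite_compositions: "finite (compositions K N)"
proof -
  have "compositions K N \<subseteq> {c. \<forall>x. (x \<in> {..K} \<longrightarrow> c x \<in> {..N}) \<and> (x \<notin> {..K} \<longrightarrow> c x = 0)}"
    using compositions_le by (auto simp: compositions_def)
  moreover have "finite {c. \<forall>x. (x \<in> {..K} \<longrightarrow> c x \<in> {..N}) \<and> (x \<notin> {..K} \<longrightarrow> c x = 0)}"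
    by (intro finite_set_of_finite_funs) auto
  ultimately show ?thesis by (rule finite_subset)
qed

lemma compositions_0: "compositions K 0 = {\<lambda>_. 0}"
proof
  show "compositions K 0 \<subseteq> {\<lambda>_. 0}" using compositions_le by fastforce
qed (simp add: compositions_def)

lemma sum_atMost_remove:
  fixes f :: "nat \<Rightarrow> 'a::comm_monoid_add"
  shows "k \<le> K \<Longrightarrow> (\<Sum>j\<le>K. f j) = f k + (\<Sum>j\<in>{..K} - {k}. f j)"
  by (subst sum.remove[of _ k]) auto

lemma prod_atMost_remove:
  fixes f :: "nat \<Rightarrow> 'a::comm_monoid_mult"
  shows "k \<le> K \<Longrightarrow> (\<Prod>j\<le>K. f j) = f k * (\<Prod>j\<in>{..K} - {k}. f j)"
  by (subst prod.remove[of _ k]) auto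

lemma compositions_add_unit:
  assumes "c \<in> compositions K N" "k \<le> K" shows "c(k := Suc (c k)) \<in> compositions K (Suc N)"
proof -
  have "(\<Sum>j\<le>K. (c(k := Suc (c k))) j) = Suc (c k) + (\<Sum>j\<in>{..K} - {k}. c j)"
    using sum_atMost_remove[OF assms(2), of "c(k := Suc (c k))"] by simp
  also have "\<dots> = Suc (\<Sum>j\<le>K. c j)" using sum_atMost_remove[OF assms(2), of c] by simp
  finally show ?thesis using assms by (auto simp: compositions_def)
qed

lemma compositions_remove_unit:
  assumes "c \<in> compositions K (Suc N)" "k \<le> K" "0 < c k" shows "c(k := c k - 1) \<in> compositions K N"
proof -
  have "(\<Sum>j\<le>K. (c(k := c k - 1)) j) = (c k - 1) + (\<Sum>j\<in>{..K} - {k}. c j)"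
    using sum_atMost_remove[OF assms(2), of "c(k := c k - 1)"] by simp
  also have "\<dots> = (\<Sum>j\<le>K. c j) - 1" using sum_atMost_remove[OF assms(2), of c] assms(3) by simp
  finally show ?thesis using assms by (auto simp: compositions_def)
qed

lemma sum_atMost_mult_add_unit:
  assumes "k \<le> K" shows "(\<Sum>j\<le>K. j * (c(k := Suc (c k))) j) = (\<Sum>j\<le>K. j * c j) + k"
proof -
  have "(\<Sum>j\<le>K. j * (c(k := Suc (c k))) j) = k * Suc (c k) + (\<Sum>j\<in>{..K} - {k}. j * c j)"
    using sum_atMost_remove[OF assms, of "\<lambda>j. j * (c(k := Suc (c k))) j"] by simp
  moreover have "(\<Sum>j\<le>K. j * c j) = k * c k + (\<Sum>j\<in>{..K} - {k}. j * c j)"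
    by (rule sum_atMost_remove[OF assms])
  ultimately show ?thesis by simp
qed

lemma type_mass_remove_unit:
  assumes "c \<in> compositions K (Suc N)" "k \<le> K" "0 < c k"
  shows "real (Suc N) * (p k * type_mass p K N (c(k := c k - 1))) = real (c k) * type_mass p K (Suc N) c"
proof -
  have F: "(\<Prod>j\<le>K. fact (c j) :: real) = real (c k) * (\<Prod>j\<le>K. fact ((c(k := c k - 1)) j))"
    using prod_atMost_remove[OF assms(2), of "\<lambda>j. fact (c j) :: real"]
      prod_atMost_remove[OF assms(2), of "\<lambda>j. fact ((c(k := c k - 1)) j) :: real"] fact_reduce[OF assms(3)]
    by simp
  have P: "p k * (\<Prod>j\<le>K. p j ^ (c(k := c k - 1)) j) = (\<Prod>j\<le>K. p j ^ c j)"
    using prod_atMost_remove[OF assms(2), of "\<lambda>j. p j ^ c j"]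
      prod_atMost_remove[OF assms(2), of "\<lambda>j. p j ^ (c(k := c k - 1)) j"] assms(3)
    by (cases "c k") simp_all
  have "(\<Prod>j\<le>K. fact ((c(k := c k - 1)) j) :: real) > 0" by (intro prod_pos) auto
  then show ?thesis unfolding type_mass_def F P[symmetric] using assms(3)
    by (simp add: field_simps)
qed

text \<open>Conditioning on the value of one draw: the basic recursion behind the multinomial theorem and
  the hitting-time identity below.\<close>
lemma sum_compositions_add_unit:
  assumes k: "k \<le> K"
  shows "real (Suc N) * (\<Sum>c\<in>{c \<in> compositions K N. P (c(k := Suc (c k)))}. p k * type_mass p K N c)
    = (\<Sum>c\<in>{c \<in> compositions K (Suc N). P c}. real (c k) * type_mass p K (Suc N) c)"
proof -
  have "(\<Sum>c\<in>{c \<in> compositions K N. P (c(k := Suc (c k)))}. p k * type_mass p K N c)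
      = (\<Sum>c\<in>{c \<in> compositions K (Suc N). 0 < c k \<and> P c}. p k * type_mass p K N (c(k := c k - 1)))"
    by (rule sum.reindex_bij_witness[where i = "\<lambda>c. c(k := c k - 1)" and j = "\<lambda>c. c(k := Suc (c k))"])
      (auto intro: compositions_add_unit compositions_remove_unit[simplified] simp: k)
  then have "real (Suc N) * (\<Sum>c\<in>{c \<in> compositions K N. P (c(k := Suc (c k)))}. p k * type_mass p K N c)
      = (\<Sum>c\<in>{c \<in> compositions K (Suc N). 0 < c k \<and> P c}. real (Suc N) * (p k * type_mass p K N (c(k := c k - 1))))"
    by (simp only: sum_distrib_left)
  also have "\<dots> = (\<Sum>c\<in>{c \<in> compositions K (Suc N). 0 < c k \<and> P c}. real (c k) * type_mass p K (Suc N) c)"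
    by (intro sum.cong refl type_mass_remove_unit[OF _ k]) auto
  also have "\<dots> = (\<Sum>c\<in>{c \<in> compositions K (Suc N). P c}. real (c k) * type_mass p K (Suc N) c)"
    by (rule sum.mono_neutral_left) (auto simp: finite_compositions)
  finally show ?thesis .
qed

lemma multinomial_theorem:
  "(\<Sum>c\<in>compositions K N. type_mass p K N c) = (\<Sum>k\<le>K. p k) ^ N"
proof (induction N)
  case 0 then show ?case by (simp add: compositions_0 type_mass_def)
next
  case (Suc N)
  have "real (Suc N) * (\<Sum>k\<le>K. p k) ^ Suc N
      = (\<Sum>k\<le>K. real (Suc N) * (\<Sum>c\<in>compositions K N. p k * type_mass p K N c))"
    using Suc by (simp add: sum_distrib_left[symmetric] sum_distrib_right[symmetric] mult.assoc)
  also have "\<dots> = (\<Sum>k\<le>K. \<Sum>c\<in>compositions K (Suc N). real (c k) * type_mass p K (Suc N) c)"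
  proof (intro sum.cong refl)
    fix k assume "k \<in> {..K}"
    then show "real (Suc N) * (\<Sum>c\<in>compositions K N. p k * type_mass p K N c)
        = (\<Sum>c\<in>compositions K (Suc N). real (c k) * type_mass p K (Suc N) c)"
      using sum_compositions_add_unit[where P="\<lambda>_. True" and k=k and K=K and N=N] by (simp only: atMost_iff simp_thms Collect_mem_eq)
  qed
  also have "\<dots> = (\<Sum>c\<in>compositions K (Suc N). (\<Sum>k\<le>K. real (c k)) * type_mass p K (Suc N) c)"
    by (subst sum.swap) (simp only: sum_distrib_right)
  also have "\<dots> = (\<Sum>c\<in>compositions K (Suc N). real (Suc N) * type_mass p K (Suc N) c)"
    by (intro sum.cong refl) (simp add: compositions_def flip: of_nat_sum)
  also have "\<dots> = real (Suc N) * (\<Sum>c\<in>compositions K (Suc N). type_mass p K (Suc N) c)"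
    by (simp only: sum_distrib_left)
  finally show ?case by simp
qed


subsection \<open>Kemperman's formula\<close>

text \<open>The probability that \<open>N\<close> i.i.d.\ offspring numbers sum to \<open>N - m\<close>, i.e.\ that the
  Lukasiewicz walk started at \<open>m\<close> sits at \<open>0\<close> at time \<open>N\<close>.\<close>
definition walk_prob :: "(nat \<Rightarrow> real) \<Rightarrow> nat \<Rightarrow> nat \<Rightarrow> nat \<Rightarrow> real" where
  "walk_prob \<mu> K m N = (\<Sum>c\<in>{c \<in> compositions K N. (\<Sum>k\<le>K. k * c k) + m = N}. type_mass \<mu> K N c)"

lemma walk_prob_Suc:
  assumes m: "1 \<le> m"
  shows "real (Suc N) * (\<Sum>k\<le>K. \<mu> k * real (m - 1 + k) * walk_prob \<mu> K (m - 1 + k) N)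
    = real m * real N * walk_prob \<mu> K m (Suc N)"
proof -
  define P where "P c \<longleftrightarrow> (\<Sum>j\<le>K. j * c j) + m = Suc N" for c :: "nat \<Rightarrow> nat"
  define S where "S = {c \<in> compositions K (Suc N). P c}"
  have step: "real (Suc N) * (\<mu> k * real (m - 1 + k) * walk_prob \<mu> K (m - 1 + k) N)
      = real (m - 1 + k) * (\<Sum>c\<in>S. real (c k) * type_mass \<mu> K (Suc N) c)" if k: "k \<le> K" for k
  proof -
    have "{c \<in> compositions K N. (\<Sum>j\<le>K. j * c j) + (m - 1 + k) = N}
        = {c \<in> compositions K N. P (c(k := Suc (c k)))}"
      using m unfolding P_def by (intro Collect_cong) (simp only: sum_atMost_mult_add_unit[OF k], arith)
    then have "real (Suc N) * (\<mu> k * real (m - 1 + k) * walk_prob \<mu> K (m - 1 + k) N)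
        = real (m - 1 + k) * (real (Suc N) * (\<Sum>c\<in>{c \<in> compositions K N. P (c(k := Suc (c k)))}. \<mu> k * type_mass \<mu> K N c))"
      unfolding walk_prob_def by (simp only: sum_distrib_left mult_ac)
    then show ?thesis unfolding sum_compositions_add_unit[OF k] S_def .
  qed
  have weights: "(\<Sum>k\<le>K. real (m - 1 + k) * real (c k)) = real m * real N" if "c \<in> S" for c
  proof -
    have "(\<Sum>k\<le>K. real (c k)) = real (Suc N)" "(\<Sum>k\<le>K. real k * real (c k)) + real m = real (Suc N)"
      using that unfolding S_def P_def compositions_def by (simp_all flip: of_nat_sum of_nat_mult of_nat_add)
    moreover have "(\<Sum>k\<le>K. real (m - 1 + k) * real (c k))
        = (real m - 1) * (\<Sum>k\<le>K. real (c k)) + (\<Sum>k\<le>K. real k * real (c k))"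
    proof -
      have "real (m - 1 + k) * real (c k) = (real m - 1) * real (c k) + real k * real (c k)" for k
        using m by (simp add: of_nat_diff algebra_simps)
      then show ?thesis by (simp add: sum.distrib sum_distrib_left)
    qed
    ultimately show ?thesis by (simp add: algebra_simps)
  qed
  have "real (Suc N) * (\<Sum>k\<le>K. \<mu> k * real (m - 1 + k) * walk_prob \<mu> K (m - 1 + k) N)
      = (\<Sum>k\<le>K. \<Sum>c\<in>S. real (m - 1 + k) * real (c k) * type_mass \<mu> K (Suc N) c)"
    unfolding sum_distrib_left by (intro sum.cong refl trans[OF step]) (auto simp: sum_distrib_left mult.assoc)
  also have "\<dots> = (\<Sum>c\<in>S. (\<Sum>k\<le>K. real (m - 1 + k) * real (c k)) * type_mass \<mu> K (Suc N) c)"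
    by (subst sum.swap) (simp add: sum_distrib_right)
  also have "\<dots> = (\<Sum>c\<in>S. real m * real N * type_mass \<mu> K (Suc N) c)"
    by (intro sum.cong refl) (simp only: weights)
  also have "\<dots> = real m * real N * walk_prob \<mu> K m (Suc N)"
    unfolding walk_prob_def S_def P_def by (simp add: sum_distrib_left)
  finally show ?thesis .
qed

lemma walk_prob_0: "1 \<le> m \<Longrightarrow> walk_prob \<mu> K m 0 = 0"
  unfolding walk_prob_def by simp

lemma walk_prob_1:
  assumes "1 \<le> m" shows "walk_prob \<mu> K m 1 = (if m = 1 then \<mu> 0 else 0)"
proof (cases "m = 1")
  case True
  have "{c \<in> compositions K 1. (\<Sum>k\<le>K. k * c k) + m = 1} = {(\<lambda>_. 0)(0 := 1)}"
  proof
    show "{c \<in> compositions K 1. (\<Sum>k\<le>K. k * c k) + m = 1} \<subseteq> {(\<lambda>_. 0)(0 := 1)}"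
    proof
      fix c assume c: "c \<in> {c \<in> compositions K 1. (\<Sum>k\<le>K. k * c k) + m = 1}"
      then have z: "\<forall>k\<le>K. k * c k = 0" using True by simp
      have "(\<Sum>k\<in>{..K} - {0}. c k) = 0" using z by (intro sum.neutral) auto
      then have "c 0 = 1" using c sum_atMost_remove[of 0 K c] by (simp add: compositions_def)
      moreover have "\<forall>k>K. c k = 0" using c by (simp add: compositions_def)
      ultimately have "c k = ((\<lambda>_. 0)(0 := 1)) k" for k using z by (cases "k = 0"; cases "k \<le> K") auto
      then have "c = (\<lambda>_. 0)(0 := 1)" by blast
      then show "c \<in> {(\<lambda>_. 0)(0 := 1)}" by simp
    qed
  qed (use True in \<open>auto simp: compositions_def sum.delta\<close>)
  then show ?thesis using True by (simp add: walk_prob_def type_mass_def prod.delta if_distrib cong: if_cong)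
next
  case False
  then have E: "{c \<in> compositions K 1. (\<Sum>k\<le>K. k * c k) + m = 1} = {}"
    using assms by auto
  show ?thesis using False unfolding walk_prob_def E by simp
qed

text \<open>Kemperman's formula (the cycle lemma) is the corresponding equality; the inequality suffices.\<close>
lemma walk_prob_le_forest_weight:
  assumes \<mu>: "\<forall>k. 0 \<le> \<mu> k"
  shows "real m * walk_prob \<mu> K m N \<le> real N * forest_weight \<mu> K m N"
proof (induction N arbitrary: m)
  case 0
  show ?case by (cases "m = 0") (simp_all add: walk_prob_0)
next
  case (Suc N)
  show ?case
  proof (cases "m = 0")
    case True then show ?thesis using forest_weight_nonneg[OF \<mu>] by simp
  next
    case False
    then have m: "1 \<le> m" by simp
    have rec: "(\<Sum>k\<le>K. \<mu> k * forest_weight \<mu> K (m - 1 + k) N) \<le> forest_weight \<mu> K m (Suc N)"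
      by (rule forest_weight_Suc_ge[OF \<mu> m])
    show ?thesis
    proof (cases "N = 0")
      case True
      have "\<mu> 0 * forest_weight \<mu> K (m - 1) 0 \<le> (\<Sum>k\<le>K. \<mu> k * forest_weight \<mu> K (m - 1 + k) 0)"
        using member_le_sum[of 0 "{..K}" "\<lambda>k. \<mu> k * forest_weight \<mu> K (m - 1 + k) 0"] \<mu>
          forest_weight_nonneg[OF \<mu>] by simp
      then show ?thesis
        using rec True walk_prob_1[OF m] forest_weight_0_0 forest_weight_nonneg[OF \<mu>] by auto
    next
      case False
      have "real m * real N * walk_prob \<mu> K m (Suc N)
          = real (Suc N) * (\<Sum>k\<le>K. \<mu> k * (real (m - 1 + k) * walk_prob \<mu> K (m - 1 + k) N))"
        using walk_prob_Suc[OF m] by (simp add: mult.assoc)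
      also have "\<dots> \<le> real (Suc N) * (\<Sum>k\<le>K. \<mu> k * (real N * forest_weight \<mu> K (m - 1 + k) N))"
        by (intro mult_left_mono sum_mono Suc.IH) (auto simp: \<mu>)
      also have "\<dots> = real (Suc N) * real N * (\<Sum>k\<le>K. \<mu> k * forest_weight \<mu> K (m - 1 + k) N)"
        by (simp add: sum_distrib_left algebra_simps)
      also have "\<dots> \<le> real (Suc N) * real N * forest_weight \<mu> K m (Suc N)"
        using rec by (intro mult_left_mono) auto
      finally have "real N * (real m * walk_prob \<mu> K m (Suc N)) \<le> real N * (real (Suc N) * forest_weight \<mu> K m (Suc N))"
        by (simp add: algebra_simps)
      then show ?thesis using False by simp
    qed
  qed
qed


subsection \<open>Lower bound for the probability of a type\<close>

lemma fact_mult_pow_le_fact_add: "fact a * a ^ d \<le> (fact (a + d) :: nat)"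
proof (induction d)
  case (Suc d)
  have "fact a * a ^ Suc d = a * (fact a * a ^ d)" by simp
  also have "\<dots> \<le> (a + Suc d) * fact (a + d)" using Suc by (intro mult_mono) auto
  finally show ?case by simp
qed simp

lemma fact_add_le_fact_mult_pow: "fact (b + d) \<le> fact b * (b + d) ^ d"
proof (induction d)
  case (Suc d)
  have "fact (b + Suc d) = (b + Suc d) * fact (b + d)" by simp
  also have "\<dots> \<le> (b + Suc d) * (fact b * (b + d) ^ d)" using Suc by (rule mult_le_mono2)
  also have "\<dots> \<le> (b + Suc d) * (fact b * (b + Suc d) ^ d)"
    by (intro mult_le_mono2 power_mono) auto
  finally show ?case by (simp add: algebra_simps)
qed simp

lemma pow_mult_fact_le: "a ^ b * fact a \<le> a ^ a * (fact b :: nat)"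
proof (cases "b \<le> a")
  case True
  then obtain d where d: "a = b + d" by (metis le_iff_add)
  have "a ^ b * fact a \<le> a ^ b * (fact b * a ^ d)" using fact_add_le_fact_mult_pow[of b d] d by simp
  then show ?thesis using d by (simp add: power_add ac_simps)
next
  case False
  then obtain d where d: "b = a + d" by (metis le_iff_add nat_le_linear)
  have "a ^ b * fact a = a ^ a * (fact a * a ^ d)" using d by (simp add: power_add)
  also have "\<dots> \<le> a ^ a * fact b" using fact_mult_pow_le_fact_add[of a d] d by simp
  finally show ?thesis .
qed

lemma card_compositions_le: "card (compositions K N) \<le> Suc N ^ Suc K"
proof -
  have "inj_on (\<lambda>c. map c [0..<Suc K]) (compositions K N)"
  proof (rule inj_onI, rule ext)
    fix c c' k assume c: "c \<in> compositions K N" "c' \<in> compositions K N"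
      and eq: "map c [0..<Suc K] = map c' [0..<Suc K]"
    show "c k = c' k"
    proof (cases "k \<le> K")
      case True
      then show ?thesis using arg_cong[OF eq, of "\<lambda>xs. xs ! k"] by (simp del: upt_Suc)
    qed (use c in \<open>simp add: compositions_def\<close>)
  qed
  moreover have "(\<lambda>c. map c [0..<Suc K]) ` compositions K N \<subseteq> {xs. set xs \<subseteq> {..N} \<and> length xs = Suc K}"
    using compositions_le by auto
  ultimately have "card (compositions K N) \<le> card {xs. set xs \<subseteq> {..N} \<and> length xs = Suc K}"
    using card_mono[OF _ \<open>_ \<subseteq> _\<close>] card_image[OF \<open>inj_on _ _\<close>] by (simp add: finite_lists_length_eq)
  then show ?thesis by (simp add: card_lists_length_eq)
qed

lemma prod_empirical_pow:
  assumes "e \<in> compositions K N"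
  shows "(\<Prod>k\<le>K. (real (c k) / real N) ^ e k) = real (\<Prod>k\<le>K. c k ^ e k) / real N ^ N"
proof -
  have "(\<Prod>k\<le>K. (real (c k) / real N) ^ e k) = (\<Prod>k\<le>K. real (c k) ^ e k) / (\<Prod>k\<le>K. real N ^ e k)"
    by (simp add: power_divide prod_dividef)
  also have "(\<Prod>k\<le>K. real N ^ e k) = real N ^ (\<Sum>k\<le>K. e k)" by (simp add: power_sum)
  finally show ?thesis using assms by (simp add: compositions_def)
qed

lemma type_mass_empirical_le:
  assumes c: "c \<in> compositions K N" and d: "d \<in> compositions K N"
  shows "type_mass (\<lambda>k. real (c k) / real N) K N d \<le> type_mass (\<lambda>k. real (c k) / real N) K N c"
proof -
  define X where "X = (\<Prod>k\<le>K. c k ^ d k)"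
  define Y where "Y = (\<Prod>k\<le>K. c k ^ c k)"
  define Fc where "Fc = (\<Prod>k\<le>K. fact (c k) :: nat)"
  define Fd where "Fd = (\<Prod>k\<le>K. fact (d k) :: nat)"
  have "(\<Prod>k\<le>K. c k ^ d k * fact (c k)) \<le> (\<Prod>k\<le>K. c k ^ c k * (fact (d k) :: nat))"
    by (intro prod_mono) (auto simp: pow_mult_fact_le)
  then have "X * Fc \<le> Y * Fd" unfolding X_def Y_def Fc_def Fd_def by (simp add: prod.distrib)
  then have "real X * real Fc \<le> real Y * real Fd" by (metis of_nat_le_iff of_nat_mult)
  moreover have "0 < Fc" "0 < Fd" unfolding Fc_def Fd_def by (auto intro: prod_pos)
  ultimately have "real X / real Fd \<le> real Y / real Fc" by (simp add: divide_simps)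
  then have "fact N * (real X / real Fd) / real N ^ N \<le> fact N * (real Y / real Fc) / real N ^ N"
    by (intro divide_right_mono mult_left_mono) auto
  then show ?thesis
    unfolding type_mass_def prod_empirical_pow[OF c] prod_empirical_pow[OF d] X_def[symmetric] Y_def[symmetric]
    by (simp add: Fc_def Fd_def field_simps)
qed

lemma type_mass_empirical_ge:
  assumes c: "c \<in> compositions K N" and N: "1 \<le> N"
  shows "1 \<le> real (Suc N) ^ Suc K * type_mass (\<lambda>k. real (c k) / real N) K N c"
proof -
  let ?p = "\<lambda>k. real (c k) / real N"
  have "(\<Sum>k\<le>K. real (c k)) = real N" using c by (simp add: compositions_def flip: of_nat_sum)
  then have "(\<Sum>k\<le>K. ?p k) = 1" using N by (simp add: sum_divide_distrib[symmetric])
  then have "1 = (\<Sum>d\<in>compositions K N. type_mass ?p K N d)" by (simp add: multinomial_theorem)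
  also have "\<dots> \<le> (\<Sum>d\<in>compositions K N. type_mass ?p K N c)"
    by (intro sum_mono type_mass_empirical_le[OF c])
  also have "\<dots> = real (card (compositions K N)) * type_mass ?p K N c" by simp
  also have "\<dots> \<le> real (Suc N) ^ Suc K * type_mass ?p K N c"
  proof (intro mult_right_mono type_mass_nonneg)
    show "real (card (compositions K N)) \<le> real (Suc N) ^ Suc K"
      using card_compositions_le[of K N] by (metis of_nat_le_iff of_nat_power)
  qed simp
  finally show ?thesis .
qed

lemma pow_mult_exp_le:
  fixes p q :: real assumes "0 < p" "0 < q" shows "p ^ n * exp (real n * (1 - p / q)) \<le> q ^ n"
proof -
  have "1 - p / q \<le> ln (q / p)"
    using ln_le_minus_one[of "p / q"] assms by (simp add: ln_div)
  then have "exp (real n * (1 - p / q)) \<le> exp (real n * ln (q / p))"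
    by (intro exp_mono mult_left_mono) auto
  also have "\<dots> = (q / p) ^ n" using assms by (simp add: exp_of_nat_mult)
  finally show ?thesis using assms by (simp add: field_simps power_divide)
qed

text \<open>Changing the law from the empirical one to \<open>\<mu>\<close> costs at most the \<open>\<chi>\<^sup>2\<close>-distance
  \<open>\<Sum>\<^sub>k (c\<^sub>k - N \<mu>\<^sub>k)\<^sup>2 / (N \<mu>\<^sub>k)\<close> in the exponent.\<close>
lemma type_mass_change_of_law:
  assumes \<mu>: "\<forall>k. 0 \<le> \<mu> k" "(\<Sum>k\<le>K. \<mu> k) = 1"
    and c: "c \<in> compositions K N" "1 \<le> N" "\<forall>k\<le>K. \<mu> k = 0 \<longrightarrow> c k = 0"
    and a: "0 < a" "\<forall>k\<le>K. 0 < \<mu> k \<longrightarrow> a \<le> \<mu> k"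
    and D: "\<forall>k\<le>K. \<bar>real (c k) - real N * \<mu> k\<bar> \<le> D"
  shows "type_mass (\<lambda>k. real (c k) / real N) K N c * exp (- (real (Suc K) * D\<^sup>2 / a)) \<le> type_mass \<mu> K N c"
proof -
  have N: "0 < real N" using c(2) by simp
  define g where "g k = (if 0 < \<mu> k then (real (c k) - real N * \<mu> k)\<^sup>2 / (real N * \<mu> k) else 0)" for k
  define f where "f k = - g k - real (c k) + real N * \<mu> k" for k
  have factor: "(real (c k) / real N) ^ c k * exp (f k) \<le> \<mu> k ^ c k" if k: "k \<le> K" for k
  proof (cases "c k = 0")
    case False
    then have "0 < \<mu> k" using c(3) k \<mu>(1) by (metis le_less)
    moreover have "f k = real (c k) * (1 - (real (c k) / real N) / \<mu> k)"
      using \<open>0 < \<mu> k\<close> N unfolding f_def g_def by (simp add: power2_eq_square field_simps)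
    ultimately show ?thesis using False N pow_mult_exp_le[of "real (c k) / real N" "\<mu> k" "c k"] by simp
  next
    case True
    have "f k = 0"
      using N \<mu>(1)[rule_format, of k] True by (cases "0 < \<mu> k") (simp_all add: f_def g_def power2_eq_square)
    then show ?thesis using True by simp
  qed
  have "(\<Sum>k\<le>K. real (c k)) = real N" using c(1) by (simp add: compositions_def flip: of_nat_sum)
  then have fg: "(\<Sum>k\<le>K. f k) = - (\<Sum>k\<le>K. g k)"
    using \<mu>(2) by (simp add: f_def sum.distrib sum_subtractf sum_negf sum_distrib_left[symmetric])
  have "g k \<le> D\<^sup>2 / a" if k: "k \<le> K" for k
  proof (cases "0 < \<mu> k")
    case True
    have "(real (c k) - real N * \<mu> k)\<^sup>2 \<le> D\<^sup>2"
      using D k by (metis abs_ge_zero power2_abs power_mono)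
    moreover have "a \<le> real N * \<mu> k"
      using a True k c(2) order.trans[of a "\<mu> k"] by (simp add: mult_le_cancel_right1)
    ultimately show ?thesis unfolding g_def using True a(1) by (simp add: frac_le)
  qed (simp add: g_def less_imp_le[OF a(1)])
  then have "- (real (Suc K) * D\<^sup>2 / a) \<le> (\<Sum>k\<le>K. f k)"
    using sum_mono[of "{..K}" g "\<lambda>_. D\<^sup>2 / a"] fg by simp
  then have "(\<Prod>k\<le>K. (real (c k) / real N) ^ c k) * exp (- (real (Suc K) * D\<^sup>2 / a))
      \<le> (\<Prod>k\<le>K. (real (c k) / real N) ^ c k) * exp (\<Sum>k\<le>K. f k)"
    by (intro mult_left_mono prod_nonneg) auto
  also have "\<dots> = (\<Prod>k\<le>K. (real (c k) / real N) ^ c k * exp (f k))"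
    by (simp add: exp_sum prod.distrib)
  also have "\<dots> \<le> (\<Prod>k\<le>K. \<mu> k ^ c k)"
    by (intro prod_mono) (auto simp: factor)
  finally show ?thesis
    unfolding type_mass_def mult.assoc by (intro mult_left_mono divide_nonneg_nonneg prod_nonneg) auto
qed

lemma type_mass_ge:
  assumes \<mu>: "\<forall>k. 0 \<le> \<mu> k" "(\<Sum>k\<le>K. \<mu> k) = 1"
    and c: "c \<in> compositions K N" "1 \<le> N" "\<forall>k\<le>K. \<mu> k = 0 \<longrightarrow> c k = 0"
    and a: "0 < a" "\<forall>k\<le>K. 0 < \<mu> k \<longrightarrow> a \<le> \<mu> k"
    and D: "\<forall>k\<le>K. \<bar>real (c k) - real N * \<mu> k\<bar> \<le> D"
  shows "exp (- (real (Suc K) * D\<^sup>2 / a)) / real (Suc N) ^ Suc K \<le> type_mass \<mu> K N c"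
proof -
  let ?E = "exp (- (real (Suc K) * D\<^sup>2 / a))"
  have "?E \<le> (real (Suc N) ^ Suc K * type_mass (\<lambda>k. real (c k) / real N) K N c) * ?E"
    using type_mass_empirical_ge[OF c(1,2)] by simp
  also have "\<dots> \<le> real (Suc N) ^ Suc K * type_mass \<mu> K N c"
    using type_mass_change_of_law[OF \<mu> c a D] by (simp add: mult.assoc mult_left_mono)
  finally show ?thesis by (simp add: divide_simps mult.commute)
qed


definition degree_count :: "nat list set \<Rightarrow> nat \<Rightarrow> nat" where
  "degree_count T k = card {u \<in> T. nchildren T u = k}"

definition tree_types :: "(nat \<Rightarrow> real) \<Rightarrow> nat \<Rightarrow> nat \<Rightarrow> (nat \<Rightarrow> nat) set" where
  "tree_types \<mu> K N = {c \<in> compositions K N. (\<Sum>k\<le>K. k * c k) + 1 = N \<and> (\<forall>k\<le>K. \<mu> k = 0 \<longrightarrow> c k = 0)}"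

lemma degree_count_mem_tree_types:
  assumes pl: "planar_tree T" and w: "gw_weight \<mu> T \<noteq> 0" and \<mu>: "\<forall>k>K. \<mu> k = 0"
  shows "degree_count T \<in> tree_types \<mu> K (card T)"
proof -
  have fin: "finite T" and "[] \<in> T" using pl by (simp_all add: planar_tree_def)
  then have pos: "0 < card T" using card_gt_0_iff by blast
  have img: "nchildren T ` T \<subseteq> {..K}"
    using gw_weight_nonzero_nchildren[OF w pl] \<mu> by (meson atMost_iff image_subsetI not_le)
  have "(\<Sum>k\<le>K. degree_count T k) = card T"
    using sum.group[OF fin _ img, of "\<lambda>_. 1::nat"] by (simp add: degree_count_def)
  moreover have "(\<Sum>k\<le>K. k * degree_count T k) = (\<Sum>k\<le>K. \<Sum>u\<in>{u\<in>T. nchildren T u = k}. nchildren T u)"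
    by (intro sum.cong refl) (simp add: degree_count_def)
  then have "(\<Sum>k\<le>K. k * degree_count T k) + 1 = card T"
    using sum.group[OF fin _ img, of "nchildren T"] sum_nchildren[OF pl] pos by simp
  moreover have "degree_count T k = 0" if "\<mu> k = 0" for k
  proof -
    have "{u \<in> T. nchildren T u = k} = {}" using that gw_weight_nonzero_nchildren[OF w pl] by auto
    then show ?thesis unfolding degree_count_def by (simp only: card.empty)
  qed
  ultimately show ?thesis using \<mu> by (simp add: tree_types_def compositions_def)
qed

lemma type_mass_le_walk_prob:
  assumes "c \<in> tree_types \<mu> K N" "\<forall>k. 0 \<le> \<mu> k"
  shows "type_mass \<mu> K N c \<le> walk_prob \<mu> K 1 N"
  unfolding walk_prob_def using assms finite_compositions
  by (intro member_le_sum type_mass_nonneg) (auto simp: tree_types_def)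


lemma H1_mu0_pos:
  assumes "H1 \<mu> K" shows "0 < \<mu> 0"
proof (rule ccontr)
  assume "\<not> 0 < \<mu> 0"
  moreover have \<mu>: "\<forall>k. 0 \<le> \<mu> k" "(\<Sum>k\<le>K. \<mu> k) = 1" "(\<Sum>k\<le>K. real k * \<mu> k) = 1" "0 < K"
    "\<mu> 0 + \<mu> 1 \<noteq> 1"
    using assms by (auto simp: H1_def)
  ultimately have \<mu>0: "\<mu> 0 = 0" by (metis le_less)
  have nonneg: "\<forall>k\<in>{..K}. 0 \<le> (real k - 1) * \<mu> k"
  proof
    fix k show "0 \<le> (real k - 1) * \<mu> k" using \<mu>(1) \<mu>0 by (cases k) simp_all
  qed
  have "(\<Sum>k\<le>K. (real k - 1) * \<mu> k) = 0"
    using \<mu>(2,3) by (simp add: left_diff_distrib sum_subtractf)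
  moreover have "(\<Sum>k\<le>K. (real k - 1) * \<mu> k) = 0 \<longleftrightarrow> (\<forall>k\<in>{..K}. (real k - 1) * \<mu> k = 0)"
    using nonneg by (intro sum_nonneg_eq_0_iff) auto
  ultimately have "\<forall>k\<in>{..K}. (real k - 1) * \<mu> k = 0" by blast
  then have "(\<Sum>k\<le>K. \<mu> k) = (\<Sum>k\<le>K. if k = 1 then \<mu> 1 else 0)"
    using \<mu>0 by (intro sum.cong refl) (metis diff_self_eq_0 mult_eq_0_iff of_nat_1 of_nat_eq_iff
        right_minus_eq atMost_iff less_one not_less)
  also have "\<dots> = \<mu> 1" using \<mu>(4) by simp
  finally show False using \<mu>(2,5) \<mu>0 by simp
qed

lemma sum_atMost_split_0:
  fixes f :: "nat \<Rightarrow> 'a::comm_monoid_add" shows "(\<Sum>k\<le>K. f k) = f 0 + (\<Sum>k\<in>{1..K}. f k)"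
proof -
  have "{..K} = insert 0 {1..K}" by auto
  then show ?thesis by simp
qed

lemma positive_values_lower_bound:
  fixes \<mu> :: "nat \<Rightarrow> real"
  obtains a where "0 < a" "\<forall>k\<le>K. 0 < \<mu> k \<longrightarrow> a \<le> \<mu> k"
proof -
  define a where "a = Min (insert 1 {\<mu> k | k. k \<le> K \<and> 0 < \<mu> k})"
  have "finite (insert 1 {\<mu> k | k. k \<le> K \<and> 0 < \<mu> k})" by simp
  then have "0 < a" "\<forall>k\<le>K. 0 < \<mu> k \<longrightarrow> a \<le> \<mu> k"
    unfolding a_def by (auto simp: Min_gr_iff intro: Min_le)
  then show thesis by (rule that)
qed

lemma finite_bounded_witnesses:
  fixes P :: "(nat \<Rightarrow> int) \<Rightarrow> 'e \<Rightarrow> bool"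
  assumes "finite R"
  obtains d where "0 \<le> d" "\<forall>e\<in>R. (\<exists>x. P x e) \<longrightarrow> (\<exists>x. P x e \<and> (\<forall>k\<le>K. \<bar>x k\<bar> \<le> d))"
proof -
  define X where "X e = (SOME x. P x e)" for e
  define d where "d = Max (insert 0 ((\<lambda>(e, k). \<bar>X e k\<bar>) ` (R \<times> {..K})))"
  have fin: "finite (insert 0 ((\<lambda>(e, k). \<bar>X e k\<bar>) ` (R \<times> {..K})))" using assms by simp
  have "\<bar>X e k\<bar> \<le> d" if "e \<in> R" "k \<le> K" for e k
    unfolding d_def using that by (intro Max_ge[OF fin]) auto
  moreover have "P (X e) e" if "\<exists>x. P x e" for e
    unfolding X_def using that by (rule someI_ex)
  moreover have "0 \<le> d" unfolding d_def using Max_ge[OF fin] by simp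
  ultimately show thesis using that by blast
qed

text \<open>Integer degree counts close to \<open>N \<mu>\<^sub>k\<close> for \<open>k \<ge> 1\<close> with the right number of edges complete to a
  tree type: the number of leaves absorbs the rest.\<close>
lemma tree_type_of_counts:
  fixes y :: "nat \<Rightarrow> int"
  assumes \<mu>: "(\<Sum>k\<le>K. \<mu> k) = 1" "0 < \<mu> 0" and e: "0 \<le> e" "real K * e \<le> real N * \<mu> 0"
    and y: "\<forall>k\<in>{1..K}. 0 \<le> y k" "\<forall>k\<in>{1..K}. \<bar>real_of_int (y k) - real N * \<mu> k\<bar> \<le> e"
      "\<forall>k\<in>{1..K}. \<mu> k = 0 \<longrightarrow> y k = 0" "(\<Sum>k\<in>{1..K}. int k * y k) = int N - 1"
  shows "\<exists>c\<in>tree_types \<mu> K N. \<forall>k\<le>K. \<bar>real (c k) - real N * \<mu> k\<bar> \<le> real (Suc K) * e"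
proof -
  have mean: "(\<Sum>k\<in>{1..K}. real N * \<mu> k) = real N * (1 - \<mu> 0)"
    using \<mu>(1) sum_atMost_split_0[of \<mu> K] by (simp add: sum_distrib_left[symmetric])
  define s where "s = (\<Sum>k\<in>{1..K}. y k)"
  have "real_of_int s \<le> (\<Sum>k\<in>{1..K}. real N * \<mu> k + e)"
    unfolding s_def of_int_sum using y(2) by (intro sum_mono) (fastforce simp: abs_le_iff)
  also have "\<dots> = real N * (1 - \<mu> 0) + real K * e" using mean by (simp add: sum.distrib)
  finally have sN: "s \<le> int N" using e by (simp add: algebra_simps)
  define c where "c k = (if k = 0 then nat (int N - s) else if k \<le> K then nat (y k) else 0)" for k
  have ck: "int (c k) = y k" if "1 \<le> k" "k \<le> K" for k using y(1) that by (simp add: c_def)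
  have c0: "int (c 0) = int N - s" using sN by (simp add: c_def)
  have "int (\<Sum>k\<le>K. c k) = int N" using sum_atMost_split_0[of c K] c0 by (simp add: s_def ck)
  moreover have "int (\<Sum>k\<le>K. k * c k) = int N - 1"
    using sum_atMost_split_0[of "\<lambda>k. k * c k" K] y(4) by (simp add: ck)
  ultimately have "(\<Sum>k\<le>K. c k) = N" "(\<Sum>k\<le>K. k * c k) + 1 = N" by linarith+
  moreover have "c k = 0" if "k \<le> K" "\<mu> k = 0" for k using that y(3) \<mu>(2) by (auto simp: c_def)
  moreover have "\<forall>k>K. c k = 0" by (simp add: c_def)
  ultimately have "c \<in> tree_types \<mu> K N" by (simp add: tree_types_def compositions_def)
  moreover have "\<bar>real (c k) - real N * \<mu> k\<bar> \<le> real (Suc K) * e" if k: "k \<le> K" for k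
  proof (cases "k = 0")
    case False
    then have "real (c k) = real_of_int (y k)" using ck[of k] k by (metis of_int_of_nat_eq less_one not_le)
    then have "\<bar>real (c k) - real N * \<mu> k\<bar> \<le> e" using y(2) False k by simp
    then show ?thesis using e(1) by (simp add: algebra_simps) (smt (verit) mult_nonneg_nonneg of_nat_0_le_iff)
  next
    case True
    have "real (c 0) = real_of_int (int (c 0))" by simp
    then have "real (c 0) - real N * \<mu> 0 = (\<Sum>k\<in>{1..K}. real N * \<mu> k - real_of_int (y k))"
      using c0 mean by (simp add: s_def sum_subtractf algebra_simps)
    also have "\<bar>\<dots>\<bar> \<le> (\<Sum>k\<in>{1..K}. e)"
      using y(2) by (intro order.trans[OF sum_abs] sum_mono) (simp add: abs_minus_commute)
    also have "\<dots> \<le> real (Suc K) * e" using e(1) by (simp add: mult_right_mono)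
    finally show ?thesis using True by simp
  qed
  ultimately show ?thesis by blast
qed

lemma tree_type_of_rounding:
  fixes x :: "nat \<Rightarrow> int"
  assumes \<mu>: "\<forall>k. 0 \<le> \<mu> k" "(\<Sum>k\<le>K. \<mu> k) = 1" "0 < \<mu> 0"
    and a: "\<forall>k\<le>K. 0 < \<mu> k \<longrightarrow> a \<le> \<mu> k" and d: "0 \<le> d" "d + 1 \<le> real N * a" "real K * (d + 1) \<le> real N * \<mu> 0"
    and x: "\<forall>k\<le>K. \<bar>real_of_int (x k)\<bar> \<le> d" "\<forall>k. \<mu> k = 0 \<longrightarrow> x k = 0"
      "(\<Sum>k\<in>{1..K}. int k * x k) = int N - 1 - (\<Sum>k\<in>{1..K}. int k * \<lfloor>real N * \<mu> k\<rfloor>)"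
  shows "\<exists>c\<in>tree_types \<mu> K N. \<forall>k\<le>K. \<bar>real (c k) - real N * \<mu> k\<bar> \<le> real (Suc K) * (d + 1)"
proof -
  define b where "b k = \<lfloor>real N * \<mu> k\<rfloor>" for k
  have b: "\<And>k. real N * \<mu> k - 1 < real_of_int (b k)" "\<And>k. real_of_int (b k) \<le> real N * \<mu> k"
    unfolding b_def by linarith+
  have edges: "(\<Sum>k\<in>{1..K}. int k * (b k + x k)) = int N - 1"
    using x(3) by (simp add: b_def sum.distrib distrib_left)
  have "\<bar>real_of_int (b k + x k) - real N * \<mu> k\<bar> \<le> d + 1" if "k \<in> {1..K}" for k
    using b[of k] x(1) that by (auto simp: abs_le_iff)
  moreover have "b k + x k = 0" if "\<mu> k = 0" for k using b[of k] x(2) that by simp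
  moreover have "0 \<le> b k + x k" if k: "k \<in> {1..K}" for k
  proof (cases "\<mu> k = 0")
    case False
    then have "real N * a \<le> real N * \<mu> k" using a k \<mu>(1) by (intro mult_left_mono) (auto simp: le_less)
    then have "0 \<le> real_of_int (b k) + real_of_int (x k)"
      using d(2) b(1)[of k] x(1) k by (auto simp: abs_le_iff)
    then show ?thesis by linarith
  qed (use b[of k] x(2) in simp)
  ultimately show ?thesis using tree_type_of_counts[OF \<mu>(2,3) _ d(3) _ _ _ edges] d(1) by simp
qed

lemma weighted_floor_sum_bounds:
  fixes \<mu> :: "nat \<Rightarrow> real" and N K :: nat
  assumes "\<forall>k. 0 \<le> \<mu> k" "(\<Sum>k\<in>{1..K}. real k * \<mu> k) = 1"
  defines "e \<equiv> int N - 1 - (\<Sum>k\<in>{1..K}. int k * \<lfloor>real N * \<mu> k\<rfloor>)"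
  shows "e \<in> {-1..int K * int K}"
proof -
  have "(\<Sum>k\<in>{1..K}. real k * real_of_int \<lfloor>real N * \<mu> k\<rfloor>) \<le> (\<Sum>k\<in>{1..K}. real k * (real N * \<mu> k))"
    by (intro sum_mono mult_left_mono) auto
  also have "\<dots> = real N * (\<Sum>k\<in>{1..K}. real k * \<mu> k)" by (simp add: sum_distrib_left algebra_simps)
  also have "\<dots> = real N" using assms(2) by simp
  finally have up: "(\<Sum>k\<in>{1..K}. real k * real_of_int \<lfloor>real N * \<mu> k\<rfloor>) \<le> real N" .
  have "(\<Sum>k\<in>{1..K}. real k * (real N * \<mu> k - 1))
      = real N * (\<Sum>k\<in>{1..K}. real k * \<mu> k) - (\<Sum>k\<in>{1..K}. real k)"
    by (simp add: sum_distrib_left sum_subtractf algebra_simps)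
  moreover have "(\<Sum>k\<in>{1..K}. real k) \<le> (\<Sum>k\<in>{1..K}. real K)" by (intro sum_mono) auto
  ultimately have "real N - real K * real K \<le> (\<Sum>k\<in>{1..K}. real k * (real N * \<mu> k - 1))"
    using assms(2) by simp
  also have "\<dots> \<le> (\<Sum>k\<in>{1..K}. real k * real_of_int \<lfloor>real N * \<mu> k\<rfloor>)"
    by (intro sum_mono mult_left_mono) linarith+
  finally have "real_of_int e \<in> {-1..real K * real K}"
    using up unfolding e_def by simp
  then have "real_of_int (- 1) \<le> real_of_int e" "real_of_int e \<le> real_of_int (int K * int K)" by simp_all
  then show ?thesis by (simp only: of_int_le_iff atLeastAtMost_iff)
qed

lemma tree_type_correction:
  assumes "c \<in> tree_types \<mu> K N"
  shows "(\<Sum>k\<in>{1..K}. int k * (if \<mu> k = 0 then 0 else int (c k) - \<lfloor>real N * \<mu> k\<rfloor>))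
    = int N - 1 - (\<Sum>k\<in>{1..K}. int k * \<lfloor>real N * \<mu> k\<rfloor>)"
proof -
  have "(\<Sum>k\<in>{1..K}. int k * (if \<mu> k = 0 then 0 else int (c k) - \<lfloor>real N * \<mu> k\<rfloor>))
      = (\<Sum>k\<in>{1..K}. int k * int (c k) - int k * \<lfloor>real N * \<mu> k\<rfloor>)"
    using assms by (intro sum.cong refl) (auto simp: tree_types_def right_diff_distrib)
  also have "\<dots> = int N - 1 - (\<Sum>k\<in>{1..K}. int k * \<lfloor>real N * \<mu> k\<rfloor>)"
    using assms sum_atMost_split_0[of "\<lambda>k. k * c k" K]
    by (simp add: sum_subtractf tree_types_def flip: of_nat_sum of_nat_mult)
  finally show ?thesis .
qed

lemma exists_tree_type_near_mean:
  assumes "H1 \<mu> K"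
  shows "\<exists>D N0. \<forall>N\<ge>N0. \<forall>c'\<in>tree_types \<mu> K N.
    \<exists>c\<in>tree_types \<mu> K N. \<forall>k\<le>K. \<bar>real (c k) - real N * \<mu> k\<bar> \<le> D"
proof -
  have \<mu>: "\<forall>k. 0 \<le> \<mu> k" "(\<Sum>k\<le>K. \<mu> k) = 1" "0 < \<mu> 0" "(\<Sum>k\<in>{1..K}. real k * \<mu> k) = 1"
    using assms H1_mu0_pos[OF assms] sum_atMost_split_0[of "\<lambda>k. real k * \<mu> k" K] by (auto simp: H1_def)
  obtain a where a: "0 < a" "\<forall>k\<le>K. 0 < \<mu> k \<longrightarrow> a \<le> \<mu> k" using positive_values_lower_bound by blast
  define P where "P x e \<longleftrightarrow> (\<forall>k. \<mu> k = 0 \<longrightarrow> x k = 0) \<and> (\<Sum>k\<in>{1..K}. int k * x k) = e" for x e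
  obtain d0 where d0: "0 \<le> d0"
    "\<forall>e\<in>{-1..int K * int K}. (\<exists>x. P x e) \<longrightarrow> (\<exists>x. P x e \<and> (\<forall>k\<le>K. \<bar>x k\<bar> \<le> d0))"
    using finite_bounded_witnesses[of "{-1..int K * int K}" P K] by auto
  define d where "d = real_of_int d0"
  define N0 where "N0 = nat \<lceil>(d + 1) / a + real K * (d + 1) / \<mu> 0\<rceil>"
  have "\<exists>c\<in>tree_types \<mu> K N. \<forall>k\<le>K. \<bar>real (c k) - real N * \<mu> k\<bar> \<le> real (Suc K) * (d + 1)"
    if N: "N0 \<le> N" and c': "c' \<in> tree_types \<mu> K N" for N c'
  proof -
    have "(d + 1) / a + real K * (d + 1) / \<mu> 0 \<le> real N" using N unfolding N0_def by linarith
    moreover have "0 \<le> (d + 1) / a" "0 \<le> real K * (d + 1) / \<mu> 0" using d0 a \<mu>(3) by (simp_all add: d_def)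
    ultimately have "(d + 1) / a \<le> real N" "real K * (d + 1) / \<mu> 0 \<le> real N" by linarith+
    then have large: "d + 1 \<le> real N * a" "real K * (d + 1) \<le> real N * \<mu> 0"
      using a(1) \<mu>(3) by (simp_all add: divide_le_eq)
    define e where "e = int N - 1 - (\<Sum>k\<in>{1..K}. int k * \<lfloor>real N * \<mu> k\<rfloor>)"
    have "P (\<lambda>k. if \<mu> k = 0 then 0 else int (c' k) - \<lfloor>real N * \<mu> k\<rfloor>) e"
      using tree_type_correction[OF c'] by (simp add: P_def e_def)
    moreover have "e \<in> {-1..int K * int K}"
      unfolding e_def by (rule weighted_floor_sum_bounds[OF \<mu>(1,4)])
    ultimately obtain x where x: "P x e" "\<forall>k\<le>K. \<bar>x k\<bar> \<le> d0" using d0(2) by blast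
    then have "\<forall>k\<le>K. \<bar>real_of_int (x k)\<bar> \<le> d" by (simp add: d_def flip: of_int_abs)
    then show ?thesis
      using tree_type_of_rounding[OF \<mu>(1-3) a(2) _ large] x(1) d0(1) by (simp add: P_def e_def d_def)
  qed
  then show ?thesis by blast
qed

lemma gw_size_prob_lower_bound:
  assumes "H1 \<mu> K"
  obtains E N1 where "0 < E"
    "\<And>n. N1 \<le> n \<Longrightarrow> 0 < gw_size_prob \<mu> n \<Longrightarrow> E / real (n + 2) ^ (K + 2) \<le> gw_size_prob \<mu> n"
proof -
  have \<mu>: "\<forall>k. 0 \<le> \<mu> k" "(\<Sum>k\<le>K. \<mu> k) = 1" "\<forall>k>K. \<mu> k = 0" using assms by (simp_all add: H1_def)
  obtain D N0 where near: "\<forall>N\<ge>N0. \<forall>c'\<in>tree_types \<mu> K N.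
      \<exists>c\<in>tree_types \<mu> K N. \<forall>k\<le>K. \<bar>real (c k) - real N * \<mu> k\<bar> \<le> D"
    using exists_tree_type_near_mean[OF assms] by blast
  obtain a where a: "0 < a" "\<forall>k\<le>K. 0 < \<mu> k \<longrightarrow> a \<le> \<mu> k" using positive_values_lower_bound by blast
  define E where "E = exp (- (real (Suc K) * D\<^sup>2 / a))"
  have "E / real (n + 2) ^ (K + 2) \<le> gw_size_prob \<mu> n" if n: "N0 \<le> n" and pos: "0 < gw_size_prob \<mu> n" for n
  proof -
    have "\<exists>T\<in>trees_of_size (Suc n). gw_weight \<mu> T \<noteq> 0"
    proof (rule ccontr)
      assume "\<not> (\<exists>T\<in>trees_of_size (Suc n). gw_weight \<mu> T \<noteq> 0)"
      then have "gw_size_prob \<mu> n = 0" unfolding gw_size_prob_def by simp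
      then show False using pos by simp
    qed
    then obtain T where T: "T \<in> trees_of_size (Suc n)" "gw_weight \<mu> T \<noteq> 0" by blast
    moreover have "planar_tree T" "card T = Suc n" using T(1) by (simp_all add: trees_of_size_def)
    ultimately have "degree_count T \<in> tree_types \<mu> K (Suc n)"
      using degree_count_mem_tree_types[OF _ _ \<mu>(3)] by metis
    then obtain c where c: "c \<in> tree_types \<mu> K (Suc n)" "\<forall>k\<le>K. \<bar>real (c k) - real (Suc n) * \<mu> k\<bar> \<le> D"
      using near[rule_format, of "Suc n"] n by auto
    have "E / real (Suc (Suc n)) ^ Suc K \<le> type_mass \<mu> K (Suc n) c"
      using c unfolding E_def tree_types_def by (intro type_mass_ge[OF \<mu>(1,2) _ _ _ a]) auto
    also have "\<dots> \<le> walk_prob \<mu> K 1 (Suc n)" by (rule type_mass_le_walk_prob[OF c(1) \<mu>(1)])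
    also have "\<dots> \<le> real (Suc n) * forest_weight \<mu> K 1 (Suc n)"
      using walk_prob_le_forest_weight[OF \<mu>(1), of 1 K "Suc n"] by simp
    also have "\<dots> \<le> real (Suc (Suc n)) * gw_size_prob \<mu> n"
      using forest_weight_1_le_gw_size_prob[OF \<mu>(1)] forest_weight_nonneg[OF \<mu>(1)] pos
      by (intro mult_mono) auto
    finally have "E \<le> real (Suc (Suc n)) ^ Suc K * (real (Suc (Suc n)) * gw_size_prob \<mu> n)"
      by (simp add: divide_le_eq mult.commute)
    also have "\<dots> = real (n + 2) ^ (K + 2) * gw_size_prob \<mu> n"
      by (simp add: numeral_2_eq_2 mult_ac)
    finally show ?thesis by (simp add: divide_le_eq mult.commute)
  qed
  moreover have "0 < E" by (simp add: E_def)
  ultimately show thesis using that by blast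
qed

lemma cond_prob_mono:
  assumes "\<forall>k. 0 \<le> \<mu> k" "0 < gw_size_prob \<mu> n" "\<And>T. E T \<Longrightarrow> F T"
  shows "cond_prob \<mu> n E \<le> cond_prob \<mu> n F"
  unfolding cond_prob_def using assms finite_trees_of_size
  by (intro divide_right_mono sum_mono2) (auto simp: gw_weight_nonneg)

lemma deviation_ratio_le:
  fixes S Z E c :: real
  assumes n: "2 \<le> n" and E: "0 < E" and Z: "E / real (n + 2) ^ (K + 2) \<le> Z"
    and S: "S \<le> real ((K + 1)\<^sup>2 * n\<^sup>2) * (2 * real n powr (- (c + real K + 5)))"
    and n_large: "2 * real ((K + 1)\<^sup>2) * 2 powr real (K + 2) / E \<le> real n"
  shows "S / Z \<le> real n powr (- c)"
proof (cases "S \<le> 0")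
  case True
  have "0 < E / real (n + 2) ^ (K + 2)" using E by simp
  then have "S / Z \<le> 0" using True Z by (simp add: divide_nonpos_pos)
  then show ?thesis by (meson order.trans powr_ge_zero)
next
  case False
  define x where "x = real n"
  have x: "2 \<le> x" using n by (simp add: x_def)
  have Q: "real (n + 2) ^ (K + 2) \<le> 2 powr real (K + 2) * x powr real (K + 2)"
  proof -
    have "real (n + 2) ^ (K + 2) = real (n + 2) powr real (K + 2)" by (rule powr_realpow[symmetric]) simp
    also have "\<dots> \<le> (2 * x) powr real (K + 2)" using n by (intro powr_mono2) (auto simp: x_def)
    also have "\<dots> = 2 powr real (K + 2) * x powr real (K + 2)" using x by (simp add: powr_mult)
    finally show ?thesis .
  qed
  have S': "S \<le> real ((K + 1)\<^sup>2) * x powr 2 * (2 * x powr (- (c + real K + 5)))"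
    using S x by (simp add: x_def powr_numeral)
  have exponent: "2 + (- (c + real K + 5)) + real (K + 2) = - c - 1" by simp
  have "0 < E / real (n + 2) ^ (K + 2)" using E by simp
  then have "S / Z \<le> S / (E / real (n + 2) ^ (K + 2))"
    using False Z by (intro divide_left_mono mult_pos_pos) auto
  also have "\<dots> = S * real (n + 2) ^ (K + 2) / E" by simp
  also have "\<dots> \<le> (real ((K + 1)\<^sup>2) * x powr 2 * (2 * x powr (- (c + real K + 5))))
      * (2 powr real (K + 2) * x powr real (K + 2)) / E"
    using S' Q False E by (intro divide_right_mono mult_mono) auto
  also have "\<dots> = (2 * real ((K + 1)\<^sup>2) * 2 powr real (K + 2) / E)
      * (x powr 2 * x powr (- (c + real K + 5)) * x powr real (K + 2))"
    by (simp add: field_simps)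
  also have "x powr 2 * x powr (- (c + real K + 5)) * x powr real (K + 2) = x powr (- c - 1)"
    by (simp only: powr_add[symmetric] exponent)
  also have "(2 * real ((K + 1)\<^sup>2) * 2 powr real (K + 2) / E) * x powr (- c - 1) \<le> x * x powr (- c - 1)"
    using n_large by (intro mult_right_mono) (auto simp: x_def)
  also have "\<dots> = x powr (- c)" using x by (simp add: powr_add[symmetric] powr_mult_base)
  finally show ?thesis by (simp add: x_def)
qed

lemma cond_prob_A_l_deviation_le:
  assumes H: "H1 \<mu> K" and c: "0 < c"
  shows "\<exists>\<gamma>>0. \<exists>N. \<forall>n\<ge>N. 0 < gw_size_prob \<mu> n \<longrightarrow> cond_prob \<mu> n (A_l_deviation \<mu> K \<gamma> n) \<le> real n powr (- c)"
proof -
  have \<mu>: "\<forall>k. 0 \<le> \<mu> k" "(\<Sum>k\<le>K. \<mu> k) \<le> 1" "\<forall>k>K. \<mu> k = 0" "(\<Sum>k\<le>K. real k * \<mu> k) = 1"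
    using H by (simp_all add: H1_def)
  obtain E N1 where E: "0 < E"
    "\<And>n. N1 \<le> n \<Longrightarrow> 0 < gw_size_prob \<mu> n \<Longrightarrow> E / real (n + 2) ^ (K + 2) \<le> gw_size_prob \<mu> n"
    using gw_size_prob_lower_bound[OF H] by blast
  define \<gamma> where "\<gamma> = 2 * sqrt (c + real K + 5)"
  have \<gamma>: "0 < \<gamma>" "\<gamma>\<^sup>2 / 4 = c + real K + 5" using c by (simp_all add: \<gamma>_def power_mult_distrib)
  define N where "N = max N1 (max 2 (nat \<lceil>2 * real ((K + 1)\<^sup>2) * 2 powr real (K + 2) / E\<rceil>))"
  have "cond_prob \<mu> n (A_l_deviation \<mu> K \<gamma> n) \<le> real n powr (- c)"
    if n: "N \<le> n" and pos: "0 < gw_size_prob \<mu> n" for n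
    unfolding cond_prob_def
  proof (rule deviation_ratio_le[OF _ E(1) E(2)])
    show "2 \<le> n" "N1 \<le> n" "0 < gw_size_prob \<mu> n" "2 * real ((K + 1)\<^sup>2) * 2 powr real (K + 2) / E \<le> real n"
      using n pos unfolding N_def by linarith+
    then show "(\<Sum>T\<in>{T \<in> trees_of_size (Suc n). A_l_deviation \<mu> K \<gamma> n T}. gw_weight \<mu> T)
      \<le> real ((K + 1)\<^sup>2 * n\<^sup>2) * (2 * real n powr - (c + real K + 5))"
      using gw_mass_A_l_deviation_le[OF \<mu> \<gamma>(1)] \<gamma>(2) by simp
  qed
  then show ?thesis using \<gamma>(1) by blast
qed

theorem lemma8:
  fixes \<mu> :: "nat \<Rightarrow> real" and K :: nat
  assumes "H1 \<mu> K"
  shows "(\<forall>c>0. \<exists>\<gamma>>0. \<exists>N. \<forall>n\<ge>N. gw_size_prob \<mu> n > 0 \<longrightarrow>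
            cond_prob \<mu> n (\<lambda>T. \<exists>k j u. 1 \<le> j \<and> j \<le> k \<and> k \<le> K \<and> u \<in> T - {[]} \<and>
               \<bar>real (A_count T u k j) - \<mu> k * real (length u)\<bar>
                 \<ge> \<gamma> * sqrt (real (length u) * ln (real n)))
            \<le> real n powr (- c))
       \<and> (\<forall>c>0. \<exists>\<gamma>>0. \<exists>N. \<forall>n\<ge>N. gw_size_prob \<mu> n > 0 \<longrightarrow>
            cond_prob \<mu> n (\<lambda>T. \<exists>k j u l. 1 \<le> j \<and> j \<le> k \<and> k \<le> K \<and> u \<in> T \<and>
               0 < l \<and> l \<le> length u \<and>
               \<bar>real (A_count_l T u l k j) - \<mu> k * real l\<bar>
                 \<ge> \<gamma> * sqrt (real l * ln (real n)))
            \<le> real n powr (- c))"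
proof -
  have \<mu>: "\<forall>k. 0 \<le> \<mu> k" using assms by (simp add: H1_def)
  have "cond_prob \<mu> n (A_deviation \<mu> K \<gamma> n) \<le> cond_prob \<mu> n (A_l_deviation \<mu> K \<gamma> n)"
    if "0 < gw_size_prob \<mu> n" for n \<gamma>
    using cond_prob_mono[OF \<mu> that] A_deviation_imp_A_l_deviation by blast
  then show ?thesis
    using cond_prob_A_l_deviation_le[OF assms] unfolding A_deviation_def A_l_deviation_def
    by (meson order.trans)
qed

end
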